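(* Assume Case 3 holds. Let $\mathcal{I}_f=[\alpha,l_2]$ if $\gamma>0$ and $\mathcal{I}_f=(0,l_2]$ if $\gamma=0$. Then for every $n\ge1$, $Q^n$ contains the term $z^{\gamma_n}w^{d^n}$, and for every $l\in\mathcal{I}_f$, $$w_l(Q^n)=w_l(z^{\gamma_n}w^{d^n})=\gamma_n+l\,d^n.$$
   Context: Let $f(z,w)=(p(z),q(z,w))$ be a holomorphic skew product germ at the origin of $\mathbb{C}^2$ with $f(0,0)=(0,0)$, where $p(z)=a_\delta z^\delta+O(z^{\delta+1})$ with $a_\delta\neq0$ and integer $\delta\ge1$, and $q(z,w)=\sum_{i+j\ge1}b_{ij}z^iw^j$ is not identically zero. For $n\ge1$ write $f^n=(p^n,Q^n)$. For a nonzero germ $g=\sum g_{ij}z^iw^j$, say $g$ contains $z^aw^b$ if $g_{ab}\neq0$, and for real $l>0$ let $w_l(g)=\min\{i+lj: g_{ij}\neq0\}$. The Newton polygon $N(g)$ is the convex hull of $\bigcup_{g_{ij}\neq0}\{(x,y):x\ge i,\ y\ge j\}$. Let $(n_1,m_1),\dots,(n_s,m_s)$ be the vertices of $N(q)$ with $n_1<\cdots<n_s$, $m_1>\cdots>m_s$; for $1\le k\le s-1$ let $T_k$ be the $y$-intercept of the line through $(n_k,m_k)$ and $(n_{k+1},m_{k+1})$. Case 3 means: $s>1$ and $T_1\le\delta$; set $(\gamma,d)=(n_1,m_1)$ and $l_2=\frac{n_2-n_1}{m_1-m_2}$ (then $\delta\ge d>0$, and $\delta>d$ if $\gamma>0$).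 Define $\gamma_n=\gamma(\delta^{n-1}+\delta^{n-2}d+\cdots+d^{n-1})$ and $\alpha=\gamma/(\delta-d)$ when $\delta\neq d$. *)

theory Defs
  imports "HOL-Analysis.Analysis"
begin

definition germ_series1 :: "(nat \<Rightarrow> complex) \<Rightarrow> (complex \<Rightarrow> complex) \<Rightarrow> bool" where
  "germ_series1 a p \<longleftrightarrow> (\<exists>r>0. \<forall>z. norm z < r \<longrightarrow> (\<lambda>k. a k * z ^ k) sums p z)"

definition germ_series2 :: "(nat \<Rightarrow> nat \<Rightarrow> complex) \<Rightarrow> (complex \<Rightarrow> complex \<Rightarrow> complex) \<Rightarrow> bool" where
  "germ_series2 b q \<longleftrightarrow> (\<exists>r>0. \<forall>z w. norm z < r \<and> norm w < r \<longrightarrow>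
      ((\<lambda>(i,j). b i j * z ^ i * w ^ j) has_sum q z w) UNIV)"

definition coeff2 :: "(complex \<Rightarrow> complex \<Rightarrow> complex) \<Rightarrow> nat \<Rightarrow> nat \<Rightarrow> complex" where
  "coeff2 g i j = (deriv ^^ i) (\<lambda>z. (deriv ^^ j) (g z) 0) 0 / (fact i * fact j)"

definition skew_iter :: "(complex \<Rightarrow> complex) \<Rightarrow> (complex \<Rightarrow> complex \<Rightarrow> complex) \<Rightarrow> nat \<Rightarrow> complex \<times> complex \<Rightarrow> complex \<times> complex" where
  "skew_iter p q n = ((\<lambda>(z,w). (p z, q z w)) ^^ n)"

definition Qn :: "(complex \<Rightarrow> complex) \<Rightarrow> (complex \<Rightarrow> complex \<Rightarrow> complex) \<Rightarrow> nat \<Rightarrow> complex \<Rightarrow> complex \<Rightarrow> complex" where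
  "Qn p q n z w = snd (skew_iter p q n (z, w))"

definition newton_polygon :: "(nat \<Rightarrow> nat \<Rightarrow> complex) \<Rightarrow> (real \<times> real) set" where
  "newton_polygon c = convex hull (\<Union>{{(x,y). x \<ge> real i \<and> y \<ge> real j} | i j. c i j \<noteq> 0})"

definition w_l :: "real \<Rightarrow> (nat \<Rightarrow> nat \<Rightarrow> complex) \<Rightarrow> real" where
  "w_l l c = Inf {real i + l * real j | i j. c i j \<noteq> 0}"

definition monomial2 :: "nat \<Rightarrow> nat \<Rightarrow> nat \<Rightarrow> nat \<Rightarrow> complex" where
  "monomial2 a b = (\<lambda>i j. if i = a \<and> j = b then 1 else 0)"

definition gamma_seq :: "nat \<Rightarrow> nat \<Rightarrow> nat \<Rightarrow> nat \<Rightarrow> nat" where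
  "gamma_seq \<gamma> \<delta> d n = \<gamma> * (\<Sum>k<n. \<delta> ^ (n - 1 - k) * d ^ k)"

end

theory Submission
  imports Defs
begin

text \<open>The iterates are computed on formal double power series: P (n + 1) = p(P n) and
  Q (n + 1) = q(P n, Q n), and since substitution of convergent series with vanishing
  constant terms converges, Q n is the Taylor series of Q^n. Because p has order \<delta>,
  P n has order \<delta>^n in z with a nonzero leading term z^(\<delta>^n). If every monomial of
  Q n has l-weight at least W, then a monomial z^i w^j of q contributes l-weight at
  least \<delta>^n i + W j to Q (n + 1); as l \<le> l_2 and W \<le> l \<delta>^n (this is where l \<ge> \<alpha> is
  needed), the Newton polygon shows that z^\<gamma> w^d gives the least weight,
  \<delta>^n \<gamma> + d W = \<gamma>_(n+1) + l d^(n+1). At l = l_2 the whole first edge attains this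
  minimum; breaking ties by the larger w-degree singles out z^\<gamma> w^d, so its
  contribution z^\<gamma>_n w^(d^n) cannot cancel.\<close>

section \<open>Formal double power series\<close>

type_synonym series2 = "nat \<times> nat \<Rightarrow> complex"

definition ps_one :: series2 where
  "ps_one e = (if e = (0, 0) then 1 else 0)"

definition ps_mul :: "series2 \<Rightarrow> series2 \<Rightarrow> series2" where
  "ps_mul A B e = (\<Sum>x\<in>{..fst e}\<times>{..snd e}. A x * B (e - x))"

primrec ps_pow :: "series2 \<Rightarrow> nat \<Rightarrow> series2" where
  "ps_pow A 0 = ps_one"
| "ps_pow A (Suc n) = ps_mul A (ps_pow A n)"

text \<open>Summing over a finite box is only correct when P (0, 0) = R (0, 0) = 0, see
  ps_mul_pow_order.\<close>
definition ps_subst :: "series2 \<Rightarrow> series2 \<Rightarrow> series2 \<Rightarrow> series2" where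
  "ps_subst b P R e = (\<Sum>x\<in>{..fst e + snd e}\<times>{..fst e + snd e}.
      b x * ps_mul (ps_pow P (fst x)) (ps_pow R (snd x)) e)"

lemma ps_mul_nonzero_decomp:
  assumes "ps_mul A B e \<noteq> 0"
  obtains x y where "A x \<noteq> 0" "B y \<noteq> 0" "e = x + y"
proof -
  from assms obtain x where x: "x \<in> {..fst e}\<times>{..snd e}" "A x * B (e - x) \<noteq> 0"
    unfolding ps_mul_def by (meson sum.neutral)
  moreover have "e = x + (e - x)" using x(1) by (cases x; cases e) auto
  ultimately show ?thesis using that[of x "e - x"] by auto
qed

lemma ps_mul_single:
  assumes "x0 \<in> {..fst e}\<times>{..snd e}"
    and "\<And>x. x \<in> {..fst e}\<times>{..snd e} \<Longrightarrow> x \<noteq> x0 \<Longrightarrow> A x * B (e - x) = 0"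
  shows "ps_mul A B e = A x0 * B (e - x0)"
  unfolding ps_mul_def
  by (subst sum.remove[OF _ assms(1)]) (simp_all add: assms(2) sum.neutral)

lemma ps_mul_one_right [simp]: "ps_mul A ps_one = A"
proof
  fix e :: "nat \<times> nat"
  obtain i j where e: "e = (i, j)" by fastforce
  have "ps_mul A ps_one (i, j) = A (i, j) * ps_one ((i, j) - (i, j))"
    by (rule ps_mul_single) (auto simp: ps_one_def)
  then show "ps_mul A ps_one e = A e" by (simp add: e ps_one_def zero_prod_def)
qed

lemma ps_subst_nonzero_decomp:
  assumes "ps_subst b P R e \<noteq> 0"
  obtains x where "b x \<noteq> 0" "ps_mul (ps_pow P (fst x)) (ps_pow R (snd x)) e \<noteq> 0"
  using assms that unfolding ps_subst_def by (metis (no_types, lifting) mult_eq_0_iff sum.neutral)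

lemma ps_subst_single:
  assumes "x0 \<in> {..fst e + snd e}\<times>{..fst e + snd e}"
    and "\<And>x. x \<noteq> x0 \<Longrightarrow> b x * ps_mul (ps_pow P (fst x)) (ps_pow R (snd x)) e = 0"
  shows "ps_subst b P R e = b x0 * ps_mul (ps_pow P (fst x0)) (ps_pow R (snd x0)) e"
  unfolding ps_subst_def
  by (subst sum.remove[OF _ assms(1)]) (simp_all add: assms(2) sum.neutral)

section \<open>Weighted degrees and leading exponents\<close>

definition wdeg :: "real \<Rightarrow> nat \<times> nat \<Rightarrow> real" where
  "wdeg l x = real (fst x) + l * real (snd x)"

definition wdeg_ge :: "real \<Rightarrow> series2 \<Rightarrow> real \<Rightarrow> bool" where
  "wdeg_ge l A c \<longleftrightarrow> (\<forall>x. A x \<noteq> 0 \<longrightarrow> c \<le> wdeg l x)"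

text \<open>Ties are broken towards the larger w-degree; on the first edge of the Newton
  polygon this singles out the vertex (\<gamma>, d).\<close>
definition term_le :: "real \<Rightarrow> nat \<times> nat \<Rightarrow> nat \<times> nat \<Rightarrow> bool" where
  "term_le L x y \<longleftrightarrow> wdeg L x < wdeg L y \<or> (wdeg L x = wdeg L y \<and> snd y \<le> snd x)"

definition leading_exp :: "real \<Rightarrow> series2 \<Rightarrow> nat \<times> nat \<Rightarrow> bool" where
  "leading_exp L A x0 \<longleftrightarrow> A x0 \<noteq> 0 \<and> (\<forall>x. A x \<noteq> 0 \<longrightarrow> term_le L x0 x)"

lemma wdeg_add [simp]: "wdeg l (x + y) = wdeg l x + wdeg l y"
  by (simp add: wdeg_def algebra_simps)

lemma wdeg_ge_one: "wdeg_ge l ps_one 0"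
  by (simp add: wdeg_ge_def ps_one_def wdeg_def)

lemma wdeg_ge_mul: "wdeg_ge l A a \<Longrightarrow> wdeg_ge l B b \<Longrightarrow> wdeg_ge l (ps_mul A B) (a + b)"
  unfolding wdeg_ge_def by (metis add_mono ps_mul_nonzero_decomp wdeg_add)

lemma wdeg_ge_pow: "wdeg_ge l A a \<Longrightarrow> wdeg_ge l (ps_pow A n) (real n * a)"
proof (induction n)
  case 0 then show ?case using wdeg_ge_one by simp
next
  case (Suc n) then show ?case using wdeg_ge_mul[OF Suc.prems Suc.IH] by (simp add: algebra_simps)
qed

lemma ps_pow_order:
  assumes "A (0, 0) = 0" "ps_pow A n e \<noteq> 0"
  shows "n \<le> fst e + snd e"
proof -
  have "wdeg_ge 1 A 1"
    unfolding wdeg_ge_def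
  proof (intro allI impI)
    fix x assume "A x \<noteq> 0"
    with assms(1) have "x \<noteq> (0, 0)" by auto
    then show "1 \<le> wdeg 1 x" by (cases x) (auto simp: wdeg_def)
  qed
  from wdeg_ge_pow[OF this, of n] assms(2) have "real n * 1 \<le> wdeg 1 e"
    unfolding wdeg_ge_def by blast
  then show ?thesis by (simp add: wdeg_def)
qed

lemma ps_mul_pow_order:
  assumes "P (0, 0) = 0" "R (0, 0) = 0" "ps_mul (ps_pow P i) (ps_pow R j) e \<noteq> 0"
  shows "i + j \<le> fst e + snd e"
  using assms(3) by (rule ps_mul_nonzero_decomp)
    (use ps_pow_order[of P, OF assms(1)] ps_pow_order[of R, OF assms(2)] in force)

lemma ps_subst_zero:
  assumes "b (0, 0) = 0" "P (0, 0) = 0" "R (0, 0) = 0"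
  shows "ps_subst b P R (0, 0) = 0"
proof (rule ccontr)
  assume "ps_subst b P R (0, 0) \<noteq> 0"
  then obtain x where "b x \<noteq> 0" "ps_mul (ps_pow P (fst x)) (ps_pow R (snd x)) (0, 0) \<noteq> 0"
    using ps_subst_nonzero_decomp[of b P R "(0, 0)"] by blast
  with ps_mul_pow_order[of P R, OF assms(2,3)] assms(1) show False
    by (cases x) fastforce
qed

lemma term_le_refl: "term_le L x x"
  by (simp add: term_le_def)

lemma term_le_trans: "term_le L x y \<Longrightarrow> term_le L y z \<Longrightarrow> term_le L x z"
  by (auto simp: term_le_def)

lemma term_le_add: "term_le L a b \<Longrightarrow> term_le L c d \<Longrightarrow> term_le L (a + c) (b + d)"
  by (auto simp: term_le_def)

lemma term_le_add_eq:
  assumes "term_le L x0 x" "term_le L y0 y" "x + y = x0 + y0"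
  shows "x = x0"
proof -
  have "wdeg L x + wdeg L y = wdeg L x0 + wdeg L y0"
    using assms(3) by (metis wdeg_add)
  with assms(1,2) have w: "wdeg L x = wdeg L x0" "wdeg L y = wdeg L y0"
    unfolding term_le_def by linarith+
  with assms have "snd x = snd x0"
    unfolding term_le_def by (auto simp: prod_eq_iff)
  with w show ?thesis by (simp add: wdeg_def prod_eq_iff)
qed

lemma leading_exp_one: "leading_exp L ps_one (0, 0)"
  by (auto simp: leading_exp_def ps_one_def term_le_def)

lemma leading_exp_mul:
  assumes A: "leading_exp L A x0" and B: "leading_exp L B y0"
  shows "leading_exp L (ps_mul A B) (x0 + y0)" and "ps_mul A B (x0 + y0) = A x0 * B y0"
proof -
  have "ps_mul A B (x0 + y0) = A x0 * B (x0 + y0 - x0)"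
  proof (rule ps_mul_single)
    fix x assume "x \<in> {..fst (x0 + y0)}\<times>{..snd (x0 + y0)}" "x \<noteq> x0"
    show "A x * B (x0 + y0 - x) = 0"
    proof (rule ccontr)
      assume "A x * B (x0 + y0 - x) \<noteq> 0"
      then have "A x \<noteq> 0" "B (x0 + y0 - x) \<noteq> 0" by auto
      with A B have "term_le L x0 x" "term_le L y0 (x0 + y0 - x)"
        unfolding leading_exp_def by blast+
      moreover have "x + (x0 + y0 - x) = x0 + y0"
        using \<open>x \<in> {..fst (x0 + y0)}\<times>{..snd (x0 + y0)}\<close> by (cases x; cases x0; cases y0) auto
      ultimately show False using \<open>x \<noteq> x0\<close> term_le_add_eq by blast
    qed
  qed (cases x0; cases y0; auto)
  then show val: "ps_mul A B (x0 + y0) = A x0 * B y0" by simp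
  show "leading_exp L (ps_mul A B) (x0 + y0)"
    unfolding leading_exp_def
  proof (intro conjI allI impI)
    show "ps_mul A B (x0 + y0) \<noteq> 0" using val A B by (simp add: leading_exp_def)
    fix e assume "ps_mul A B e \<noteq> 0"
    then obtain x y where "A x \<noteq> 0" "B y \<noteq> 0" "e = x + y" by (rule ps_mul_nonzero_decomp)
    with A B show "term_le L (x0 + y0) e" unfolding leading_exp_def by (metis term_le_add)
  qed
qed

lemma leading_exp_pow:
  assumes "leading_exp L A (i, j)"
  shows "leading_exp L (ps_pow A n) (n * i, n * j)" and "ps_pow A n (n * i, n * j) = A (i, j) ^ n"
proof -
  have "leading_exp L (ps_pow A n) (n * i, n * j) \<and> ps_pow A n (n * i, n * j) = A (i, j) ^ n"
  proof (induction n)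
    case 0 show ?case by (simp add: leading_exp_one) (simp add: ps_one_def)
  next
    case (Suc n)
    have "(Suc n * i, Suc n * j) = (i, j) + (n * i, n * j)" by simp
    with Suc leading_exp_mul[OF assms, of "ps_pow A n" "(n * i, n * j)"] show ?case by simp
  qed
  then show "leading_exp L (ps_pow A n) (n * i, n * j)" "ps_pow A n (n * i, n * j) = A (i, j) ^ n"
    by auto
qed

lemma ps_subst_wdeg_ge:
  assumes P: "wdeg_ge l P cP" and R: "wdeg_ge l R cR"
    and b: "\<And>x. b x \<noteq> 0 \<Longrightarrow> c \<le> real (fst x) * cP + real (snd x) * cR"
  shows "wdeg_ge l (ps_subst b P R) c"
  unfolding wdeg_ge_def
proof (intro allI impI)
  fix e assume "ps_subst b P R e \<noteq> 0"
  then obtain x where "b x \<noteq> 0" "ps_mul (ps_pow P (fst x)) (ps_pow R (snd x)) e \<noteq> 0"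
    by (rule ps_subst_nonzero_decomp)
  with wdeg_ge_mul[OF wdeg_ge_pow[OF P] wdeg_ge_pow[OF R]] b show "c \<le> wdeg l e"
    unfolding wdeg_ge_def by (meson order_trans)
qed

text \<open>No other product P^i R^j reaches the exponent E x_lead, so the coefficient
  there cannot cancel.\<close>
lemma ps_subst_leading_exp:
  assumes P0: "P (0, 0) = 0" and R0: "R (0, 0) = 0"
    and lead: "\<And>x. b x \<noteq> 0 \<Longrightarrow> leading_exp L (ps_mul (ps_pow P (fst x)) (ps_pow R (snd x))) (E x)"
    and x_lead: "b x_lead \<noteq> 0"
    and min: "\<And>x. b x \<noteq> 0 \<Longrightarrow> term_le L (E x_lead) (E x)"
    and strict: "\<And>x. b x \<noteq> 0 \<Longrightarrow> term_le L (E x) (E x_lead) \<Longrightarrow> x = x_lead"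
  shows "leading_exp L (ps_subst b P R) (E x_lead)"
  unfolding leading_exp_def
proof (intro conjI allI impI)
  let ?C = "\<lambda>x. ps_mul (ps_pow P (fst x)) (ps_pow R (snd x))"
  have C0: "?C x_lead (E x_lead) \<noteq> 0" using lead[OF x_lead] by (simp add: leading_exp_def)
  have "ps_subst b P R (E x_lead) = b x_lead * ?C x_lead (E x_lead)"
  proof (rule ps_subst_single)
    show "x_lead \<in> {..fst (E x_lead) + snd (E x_lead)}\<times>{..fst (E x_lead) + snd (E x_lead)}"
      using ps_mul_pow_order[of P R, OF P0 R0 C0] by (cases x_lead) auto
    fix x assume "x \<noteq> x_lead"
    show "b x * ?C x (E x_lead) = 0"
    proof (rule ccontr)
      assume "b x * ?C x (E x_lead) \<noteq> 0"
      then have "b x \<noteq> 0" "?C x (E x_lead) \<noteq> 0" by auto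
      with lead have "term_le L (E x) (E x_lead)" unfolding leading_exp_def by blast
      with strict \<open>b x \<noteq> 0\<close> \<open>x \<noteq> x_lead\<close> show False by blast
    qed
  qed
  then show "ps_subst b P R (E x_lead) \<noteq> 0" using x_lead C0 by simp
  fix e assume "ps_subst b P R e \<noteq> 0"
  then obtain x where "b x \<noteq> 0" "?C x e \<noteq> 0" by (rule ps_subst_nonzero_decomp)
  with lead min show "term_le L (E x_lead) e"
    unfolding leading_exp_def by (meson term_le_trans)
qed

lemma wdeg_ge_mono_weight:
  assumes "wdeg_ge l A c" "l \<le> l'"
  shows "wdeg_ge l' A c"
  unfolding wdeg_ge_def
proof (intro allI impI)
  fix x assume "A x \<noteq> 0"
  then have "c \<le> wdeg l x" using assms(1) unfolding wdeg_ge_def by blast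
  also have "\<dots> \<le> wdeg l' x" using assms(2) by (simp add: wdeg_def mult_right_mono)
  finally show "c \<le> wdeg l' x" .
qed

lemma leading_exp_of_wdeg_ge_0:
  assumes "wdeg_ge 0 A (real k)" "A (k, 0) \<noteq> 0" "L > 0"
  shows "leading_exp L A (k, 0)"
  unfolding leading_exp_def
proof (intro conjI allI impI)
  show "A (k, 0) \<noteq> 0" by fact
  fix x assume "A x \<noteq> 0"
  then have "real k \<le> wdeg 0 x" using assms(1) unfolding wdeg_ge_def by blast
  then have k: "real k \<le> real (fst x)" by (simp add: wdeg_def)
  show "term_le L (k, 0) x"
  proof (cases "snd x = 0")
    case False
    then have "0 < L * real (snd x)" using assms(3) by simp
    with k show ?thesis by (simp add: term_le_def wdeg_def)
  qed (use k in \<open>auto simp: term_le_def wdeg_def\<close>)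
qed

lemma w_l_eq_wdeg:
  assumes "wdeg_ge l A c" "A (i, j) \<noteq> 0" "wdeg l (i, j) = c"
  shows "w_l l (\<lambda>i j. A (i, j)) = c"
  unfolding w_l_def
proof (rule cInf_eq_minimum)
  show "c \<in> {real i + l * real j |i j. A (i, j) \<noteq> 0}" using assms(2,3) by (auto simp: wdeg_def)
  fix y assume "y \<in> {real i + l * real j |i j. A (i, j) \<noteq> 0}"
  with assms(1) show "c \<le> y" by (auto simp: wdeg_ge_def wdeg_def)
qed

lemma w_l_monomial2: "w_l l (monomial2 a b) = real a + l * real b"
proof -
  have "{real i + l * real j |i j. monomial2 a b i j \<noteq> 0} = {real a + l * real b}"
    by (auto simp: monomial2_def)
  then show ?thesis unfolding w_l_def by simp
qed

section \<open>Convergent double power series\<close>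

definition ps_has_sum :: "series2 \<Rightarrow> complex \<Rightarrow> complex \<Rightarrow> complex \<Rightarrow> bool" where
  "ps_has_sum A z w S \<longleftrightarrow> ((\<lambda>x. A x * z ^ fst x * w ^ snd x) has_sum S) UNIV"

definition ps_expansion :: "series2 \<Rightarrow> (complex \<Rightarrow> complex \<Rightarrow> complex) \<Rightarrow> real \<Rightarrow> bool" where
  "ps_expansion A g r \<longleftrightarrow> r > 0 \<and> (\<forall>z w. norm z < r \<longrightarrow> norm w < r \<longrightarrow> ps_has_sum A z w (g z w))"

lemma ps_expansionD: "ps_expansion A g r \<Longrightarrow> norm z < r \<Longrightarrow> norm w < r \<Longrightarrow> ps_has_sum A z w (g z w)"
  by (simp add: ps_expansion_def)

lemma ps_expansion_mono: "ps_expansion A g r \<Longrightarrow> 0 < r' \<Longrightarrow> r' \<le> r \<Longrightarrow> ps_expansion A g r'"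
  by (simp add: ps_expansion_def)

lemma ps_has_sum_abs_summable:
  "ps_has_sum A z w S \<Longrightarrow> (\<lambda>x. norm (A x * z ^ fst x * w ^ snd x)) summable_on UNIV"
  unfolding ps_has_sum_def summable_on_iff_abs_summable_on_complex[symmetric] summable_on_def by blast

lemma ps_has_sum_norm_le:
  assumes "ps_has_sum A z w S" "norm z \<le> s" "norm w \<le> s"
    and "((\<lambda>x. norm (A x) * s ^ fst x * s ^ snd x) has_sum M) UNIV"
  shows "norm S \<le> M"
proof (rule norm_infsum_le[OF assms(1)[unfolded ps_has_sum_def] assms(4)])
  fix x :: "nat \<times> nat"
  have "0 \<le> s" using assms(2) norm_ge_zero[of z] by linarith
  moreover have "norm z ^ fst x \<le> s ^ fst x" "norm w ^ snd x \<le> s ^ snd x"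
    using assms(2,3) by (auto intro: power_mono)
  ultimately show "norm (A x * z ^ fst x * w ^ snd x) \<le> norm (A x) * s ^ fst x * s ^ snd x"
    unfolding norm_mult norm_power by (intro mult_mono) auto
qed

lemma ps_has_sum_one: "ps_has_sum ps_one z w 1"
  unfolding ps_has_sum_def by (rule has_sum_finite_neutralI[of "{(0, 0)}"]) (auto simp: ps_one_def)

lemma has_sum_mult_Times:
  fixes F G :: "'a \<Rightarrow> complex"
  assumes F: "(F has_sum SF) UNIV" and G: "(G has_sum SG) UNIV"
  shows "((\<lambda>(x, y). F x * G y) has_sum SF * SG) (UNIV \<times> UNIV)"
proof (rule has_sum_SigmaI[where g = "\<lambda>x. F x * SG"])
  show "((\<lambda>y. (\<lambda>(x, y). F x * G y) (x, y)) has_sum F x * SG) UNIV" for x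
    using has_sum_cmult_right[OF G, of "F x"] by simp
  show "((\<lambda>x. F x * SG) has_sum SF * SG) UNIV" by (rule has_sum_cmult_left[OF F])
  have Fa: "(\<lambda>x. norm (F x)) summable_on UNIV" and Ga: "(\<lambda>y. norm (G y)) summable_on UNIV"
    using F G unfolding summable_on_iff_abs_summable_on_complex[symmetric] summable_on_def by blast+
  have "(\<lambda>p. norm ((\<lambda>(x, y). F x * G y) p)) summable_on UNIV \<times> UNIV"
  proof (rule Infinite_Sum.abs_summable_on_Sigma_iff[THEN iffD2], intro conjI ballI)
    show "(\<lambda>y. norm ((\<lambda>(x, y). F x * G y) (x, y))) summable_on UNIV" for x
      using summable_on_cmult_right[OF Ga, of "norm (F x)"] by (simp add: norm_mult)
    have "(\<Sum>\<^sub>\<infinity>y. norm ((\<lambda>(x, y). F x * G y) (x, y))) = norm (F x) * (\<Sum>\<^sub>\<infinity>y. norm (G y))" for x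
      by (simp add: norm_mult infsum_cmult_right')
    moreover have "(\<Sum>\<^sub>\<infinity>y. norm (G y)) \<ge> 0" by (rule infsum_nonneg) auto
    ultimately show "(\<lambda>x. norm (\<Sum>\<^sub>\<infinity>y. norm ((\<lambda>(x, y). F x * G y) (x, y)))) summable_on UNIV"
      using summable_on_cmult_left[OF Fa, of "\<Sum>\<^sub>\<infinity>y. norm (G y)"] by (simp add: abs_mult)
  qed
  then show "(\<lambda>(x, y). F x * G y) summable_on UNIV \<times> UNIV" by (rule abs_summable_summable)
qed

text \<open>Cauchy product: reindex the product family of the two series by e = x + y.\<close>
lemma ps_has_sum_mul:
  assumes hA: "ps_has_sum A z w SA" and hB: "ps_has_sum B z w SB"
  shows "ps_has_sum (ps_mul A B) z w (SA * SB)"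
proof -
  define F where "F = (\<lambda>x. A x * z ^ fst x * w ^ snd x)"
  define G where "G = (\<lambda>y. B y * z ^ fst y * w ^ snd y)"
  have prod: "((\<lambda>(x, y). F x * G y) has_sum SA * SB) (UNIV \<times> UNIV)"
    unfolding F_def G_def
    by (rule has_sum_mult_Times[OF hA[unfolded ps_has_sum_def] hB[unfolded ps_has_sum_def]])
  define h where "h = (\<lambda>(e, x). A x * B (e - x) * z ^ fst e * w ^ snd e)"
  define T where "T = Sigma (UNIV :: (nat \<times> nat) set) (\<lambda>e. {..fst e}\<times>{..snd e})"
  have "((\<lambda>(x, y). F x * G y) has_sum SA * SB) (UNIV \<times> UNIV) = (h has_sum SA * SB) T"
  proof (rule has_sum_reindex_bij_witness[where j = "\<lambda>(x, y). (x + y, x)" and i = "\<lambda>(e, x). (x, e - x)"])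
    fix a :: "(nat \<times> nat) \<times> (nat \<times> nat)"
    obtain x y where a: "a = (x, y)" using surj_pair[of a] by blast
    show "(\<lambda>(e, x). (x, e - x)) ((\<lambda>(x, y). (x + y, x)) a) = a"
      by (simp add: a)
    show "(\<lambda>(x, y). (x + y, x)) a \<in> T" by (cases x) (auto simp: a T_def)
    have "A x * B y * z ^ (fst x + fst y) * w ^ (snd x + snd y) = F x * G y"
      unfolding F_def G_def power_add by algebra
    then show "h ((\<lambda>(x, y). (x + y, x)) a) = (\<lambda>(x, y). F x * G y) a"
      by (simp add: a h_def)
  next
    fix c :: "(nat \<times> nat) \<times> (nat \<times> nat)" assume "c \<in> T"
    moreover obtain e x where "c = (e, x)" using surj_pair[of c] by blast
    ultimately show "(\<lambda>(x, y). (x + y, x)) ((\<lambda>(e, x). (x, e - x)) c) = c"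
      by (cases e; cases x) (auto simp: T_def)
  qed auto
  with prod have hT: "(h has_sum SA * SB) T" by simp
  have "((\<lambda>e. ps_mul A B e * z ^ fst e * w ^ snd e) has_sum SA * SB) UNIV"
  proof (rule has_sum_Sigma'[OF hT[unfolded T_def]])
    fix e :: "nat \<times> nat"
    have "ps_mul A B e * z ^ fst e * w ^ snd e = (\<Sum>x\<in>{..fst e}\<times>{..snd e}. h (e, x))"
      unfolding ps_mul_def sum_distrib_right h_def by simp
    then show "((\<lambda>x. h (e, x)) has_sum ps_mul A B e * z ^ fst e * w ^ snd e) ({..fst e}\<times>{..snd e})"
      by (simp add: has_sum_finiteI)
  qed
  then show ?thesis unfolding ps_has_sum_def .
qed

lemma ps_has_sum_pow: "ps_has_sum A z w S \<Longrightarrow> ps_has_sum (ps_pow A n) z w (S ^ n)"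
  by (induction n) (simp_all add: ps_has_sum_one ps_has_sum_mul)

text \<open>Majorants have real coefficients, stored as complex numbers so that ps_mul
  applies to them.\<close>
definition ps_majorant :: "series2 \<Rightarrow> series2 \<Rightarrow> bool" where
  "ps_majorant A M \<longleftrightarrow> (\<forall>x. M x = of_real (Re (M x)) \<and> norm (A x) \<le> Re (M x))"

lemma ps_majorant_norm: "ps_majorant A (\<lambda>x. of_real (norm (A x)))"
  by (simp add: ps_majorant_def)

lemma ps_majorant_one: "ps_majorant ps_one ps_one"
  by (simp add: ps_majorant_def ps_one_def)

lemma ps_majorant_mul:
  assumes "ps_majorant A M" "ps_majorant B N"
  shows "ps_majorant (ps_mul A B) (ps_mul M N)"
  unfolding ps_majorant_def
proof (intro allI conjI)
  fix e :: "nat \<times> nat"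
  let ?S = "{..fst e}\<times>{..snd e}"
  have real_M: "of_real (Re (M x)) = M x" and real_N: "of_real (Re (N x)) = N x" for x
    using assms unfolding ps_majorant_def by metis+
  have eq: "ps_mul M N e = of_real (\<Sum>x\<in>?S. Re (M x) * Re (N (e - x)))"
    unfolding ps_mul_def of_real_sum of_real_mult real_M real_N ..
  then show "ps_mul M N e = of_real (Re (ps_mul M N e))" by simp
  have "norm (ps_mul A B e) \<le> (\<Sum>x\<in>?S. norm (A x * B (e - x)))"
    unfolding ps_mul_def by (rule norm_sum)
  also have "\<dots> \<le> (\<Sum>x\<in>?S. Re (M x) * Re (N (e - x)))"
  proof (rule sum_mono)
    fix x
    have "norm (A x) \<le> Re (M x)" "norm (B (e - x)) \<le> Re (N (e - x))"
      using assms unfolding ps_majorant_def by blast+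
    then show "norm (A x * B (e - x)) \<le> Re (M x) * Re (N (e - x))"
      unfolding norm_mult by (intro mult_mono) (auto intro: order_trans[OF norm_ge_zero])
  qed
  finally show "norm (ps_mul A B e) \<le> Re (ps_mul M N e)" by (simp add: eq)
qed

lemma ps_majorant_pow: "ps_majorant A M \<Longrightarrow> ps_majorant (ps_pow A n) (ps_pow M n)"
  by (induction n) (simp_all add: ps_majorant_one ps_majorant_mul)

lemma ps_has_sum_norm_powers:
  fixes P R :: series2 and i j :: nat
  assumes Pt: "((\<lambda>x. norm (P x) * s ^ fst x * s ^ snd x) has_sum Pt) UNIV"
    and Rt: "((\<lambda>x. norm (R x) * s ^ fst x * s ^ snd x) has_sum Rt) UNIV"
  defines "M \<equiv> ps_mul (ps_pow (\<lambda>x. of_real (norm (P x))) i) (ps_pow (\<lambda>x. of_real (norm (R x))) j)"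
  shows "((\<lambda>e. Re (M e) * s ^ fst e * s ^ snd e) has_sum Pt ^ i * Rt ^ j) UNIV"
proof -
  have real_sum: "ps_has_sum (\<lambda>x. of_real (norm (A x))) (of_real s) (of_real s) (of_real S)"
    if "((\<lambda>x. norm (A x) * s ^ fst x * s ^ snd x) has_sum S) UNIV" for A S
    unfolding ps_has_sum_def using has_sum_of_real[OF that, where 'a=complex]
    by (simp add: of_real_mult of_real_power)
  have "ps_has_sum M (of_real s) (of_real s) (of_real Pt ^ i * of_real Rt ^ j)"
    unfolding M_def by (intro ps_has_sum_mul ps_has_sum_pow real_sum Pt Rt)
  then have "((\<lambda>e. Re (M e * of_real s ^ fst e * of_real s ^ snd e)) has_sum Pt ^ i * Rt ^ j) UNIV"
    unfolding ps_has_sum_def by (metis (no_types) has_sum_Re Re_complex_of_real of_real_mult of_real_power)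
  moreover have "Re (M e * of_real s ^ fst e * of_real s ^ snd e) = Re (M e) * s ^ fst e * s ^ snd e" for e
    by (simp flip: of_real_power)
  ultimately show ?thesis by simp
qed

lemma ps_norm_sum_pow_mul_le:
  assumes hP: "ps_has_sum P z w Sp" and hR: "ps_has_sum R z w Sr"
    and z: "norm z \<le> s" and w: "norm w \<le> s"
    and Pt: "((\<lambda>x. norm (P x) * s ^ fst x * s ^ snd x) has_sum Pt) UNIV"
    and Rt: "((\<lambda>x. norm (R x) * s ^ fst x * s ^ snd x) has_sum Rt) UNIV"
  shows "(\<Sum>\<^sub>\<infinity>e. norm (ps_mul (ps_pow P i) (ps_pow R j) e * z ^ fst e * w ^ snd e)) \<le> Pt ^ i * Rt ^ j"
proof -
  define C where "C = ps_mul (ps_pow P i) (ps_pow R j)"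
  define M where "M = ps_mul (ps_pow (\<lambda>x. of_real (norm (P x))) i) (ps_pow (\<lambda>x. of_real (norm (R x))) j)"
  have s: "0 \<le> s" using z norm_ge_zero[of z] by linarith
  have maj: "ps_majorant C M"
    unfolding C_def M_def by (intro ps_majorant_mul ps_majorant_pow ps_majorant_norm)
  have hM: "((\<lambda>e. Re (M e) * s ^ fst e * s ^ snd e) has_sum Pt ^ i * Rt ^ j) UNIV"
    unfolding M_def by (rule ps_has_sum_norm_powers[OF Pt Rt])
  have "(\<Sum>\<^sub>\<infinity>e. norm (C e * z ^ fst e * w ^ snd e)) \<le> (\<Sum>\<^sub>\<infinity>e. Re (M e) * s ^ fst e * s ^ snd e)"
  proof (rule infsum_mono)
    show "(\<lambda>e. norm (C e * z ^ fst e * w ^ snd e)) summable_on UNIV"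
      unfolding C_def
      by (rule ps_has_sum_abs_summable[OF ps_has_sum_mul[OF ps_has_sum_pow[OF hP] ps_has_sum_pow[OF hR]]])
    show "(\<lambda>e. Re (M e) * s ^ fst e * s ^ snd e) summable_on UNIV"
      using hM by (auto simp: summable_on_def)
    fix e :: "nat \<times> nat"
    have "norm z ^ fst e \<le> s ^ fst e" "norm w ^ snd e \<le> s ^ snd e"
      using z w by (auto intro: power_mono)
    moreover have "norm (C e) \<le> Re (M e)" using maj unfolding ps_majorant_def by blast
    moreover have "0 \<le> Re (M e)" using calculation(3) norm_ge_zero[of "C e"] by linarith
    ultimately show "norm (C e * z ^ fst e * w ^ snd e) \<le> Re (M e) * s ^ fst e * s ^ snd e"
      unfolding norm_mult norm_power using s by (intro mult_mono) auto
  qed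
  also have "\<dots> = Pt ^ i * Rt ^ j" using hM by (simp add: infsumI)
  finally show ?thesis unfolding C_def .
qed

lemma ps_subst_family_summable:
  assumes hP: "ps_has_sum P z w Sp" and hR: "ps_has_sum R z w Sr"
    and z: "norm z \<le> s" and w: "norm w \<le> s"
    and Pt: "((\<lambda>x. norm (P x) * s ^ fst x * s ^ snd x) has_sum Pt) UNIV"
    and Rt: "((\<lambda>x. norm (R x) * s ^ fst x * s ^ snd x) has_sum Rt) UNIV"
    and hbt: "ps_has_sum b (of_real Pt) (of_real Rt) Gt"
  shows "(\<lambda>(x, e). b x * (ps_mul (ps_pow P (fst x)) (ps_pow R (snd x)) e * z ^ fst e * w ^ snd e))
           summable_on UNIV \<times> UNIV" (is "?T summable_on _")
proof (rule abs_summable_summable, rule Infinite_Sum.abs_summable_on_Sigma_iff[THEN iffD2], intro conjI ballI)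
  fix x :: "nat \<times> nat"
  have "ps_has_sum (ps_mul (ps_pow P (fst x)) (ps_pow R (snd x))) z w (Sp ^ fst x * Sr ^ snd x)"
    by (intro ps_has_sum_mul ps_has_sum_pow hP hR)
  from summable_on_cmult_right[OF ps_has_sum_abs_summable[OF this], of "norm (b x)"]
  show "(\<lambda>e. norm (?T (x, e))) summable_on UNIV" by (simp add: norm_mult mult.assoc)
next
  show "(\<lambda>x. norm (\<Sum>\<^sub>\<infinity>e. norm (?T (x, e)))) summable_on UNIV"
  proof (rule Infinite_Sum.abs_summable_on_comparison_test[OF ps_has_sum_abs_summable[OF hbt]])
    fix x :: "nat \<times> nat"
    have Pt0: "Pt \<ge> 0" and Rt0: "Rt \<ge> 0"
      using has_sum_nonneg[OF Pt] has_sum_nonneg[OF Rt] z w norm_ge_zero[of z] by force+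
    have "(\<Sum>\<^sub>\<infinity>e. norm (?T (x, e)))
        = norm (b x) * (\<Sum>\<^sub>\<infinity>e. norm (ps_mul (ps_pow P (fst x)) (ps_pow R (snd x)) e * z ^ fst e * w ^ snd e))"
      by (simp add: norm_mult infsum_cmult_right' mult.assoc)
    also have "\<dots> \<le> norm (b x) * (Pt ^ fst x * Rt ^ snd x)"
      by (intro mult_left_mono ps_norm_sum_pow_mul_le[OF hP hR z w Pt Rt]) auto
    finally show "norm (\<Sum>\<^sub>\<infinity>e. norm (?T (x, e))) \<le> norm (b x * of_real Pt ^ fst x * of_real Rt ^ snd x)"
      using Pt0 Rt0 by (simp add: infsum_nonneg norm_mult norm_power mult.assoc)
  qed
qed

text \<open>Fubini: the family b x (P^i R^j)_e is absolutely summable, since its inner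
  absolute sums are dominated by the absolute series of b at (Pt, Rt).\<close>
lemma ps_has_sum_subst:
  assumes P0: "P (0, 0) = 0" and R0: "R (0, 0) = 0"
    and hP: "ps_has_sum P z w Sp" and hR: "ps_has_sum R z w Sr"
    and z: "norm z \<le> s" and w: "norm w \<le> s"
    and Pt: "((\<lambda>x. norm (P x) * s ^ fst x * s ^ snd x) has_sum Pt) UNIV"
    and Rt: "((\<lambda>x. norm (R x) * s ^ fst x * s ^ snd x) has_sum Rt) UNIV"
    and hbt: "ps_has_sum b (of_real Pt) (of_real Rt) Gt"
    and hb: "ps_has_sum b Sp Sr G"
  shows "ps_has_sum (ps_subst b P R) z w G"
proof -
  define T where "T = (\<lambda>(x :: nat \<times> nat, e :: nat \<times> nat).
    b x * (ps_mul (ps_pow P (fst x)) (ps_pow R (snd x)) e * z ^ fst e * w ^ snd e))"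
  have inner: "((\<lambda>e. T (x, e)) has_sum b x * (Sp ^ fst x * Sr ^ snd x)) UNIV" for x
  proof -
    have "ps_has_sum (ps_mul (ps_pow P (fst x)) (ps_pow R (snd x))) z w (Sp ^ fst x * Sr ^ snd x)"
      by (intro ps_has_sum_mul ps_has_sum_pow hP hR)
    from has_sum_cmult_right[OF this[unfolded ps_has_sum_def], of "b x"] show ?thesis
      by (simp add: T_def)
  qed
  have outer: "((\<lambda>x. b x * (Sp ^ fst x * Sr ^ snd x)) has_sum G) UNIV"
    using hb unfolding ps_has_sum_def by (simp add: mult.assoc)
  have summ: "T summable_on UNIV \<times> UNIV"
    unfolding T_def by (rule ps_subst_family_summable[OF hP hR z w Pt Rt hbt])
  have "((\<lambda>(e, x). T (x, e)) has_sum G) (UNIV \<times> UNIV)"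
    using has_sum_SigmaI[OF inner outer summ] by (rule has_sum_swap[THEN iffD1])
  then have "((\<lambda>e. ps_subst b P R e * z ^ fst e * w ^ snd e) has_sum G) UNIV"
  proof (rule has_sum_Sigma')
    fix e :: "nat \<times> nat"
    let ?B = "{..fst e + snd e}\<times>{..fst e + snd e}"
    have "T (x, e) = 0" if "x \<notin> ?B" for x
    proof -
      have "\<not> fst x + snd x \<le> fst e + snd e" using that by (cases x) auto
      then have "ps_mul (ps_pow P (fst x)) (ps_pow R (snd x)) e = 0"
        using ps_mul_pow_order[of P R, OF P0 R0] by blast
      then show ?thesis by (simp add: T_def)
    qed
    moreover have "ps_subst b P R e * z ^ fst e * w ^ snd e = (\<Sum>x\<in>?B. T (x, e))"
      unfolding ps_subst_def sum_distrib_right T_def by (simp add: mult.assoc)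
    ultimately show "((\<lambda>x. (\<lambda>(e, x). T (x, e)) (e, x)) has_sum ps_subst b P R e * z ^ fst e * w ^ snd e) UNIV"
      by (intro has_sum_finite_neutralI[of ?B]) auto
  qed
  then show ?thesis unfolding ps_has_sum_def .
qed

lemma power_le_scaled:
  fixes t r :: real
  assumes "0 \<le> t" "t \<le> r" "0 < r" "1 \<le> k"
  shows "t ^ k \<le> t / r * r ^ k"
proof -
  have "t ^ k = (t / r) ^ k * r ^ k" using assms(3) by (simp add: power_divide)
  also have "\<dots> \<le> (t / r) ^ 1 * r ^ k"
    using assms by (intro mult_right_mono power_decreasing) auto
  finally show ?thesis by simp
qed

lemma ps_norm_sum_le_scaled:
  assumes P0: "P (0, 0) = 0" and r: "0 < r"
    and sm: "(\<lambda>x. norm (P x) * r ^ fst x * r ^ snd x) summable_on UNIV"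
    and t: "0 \<le> t" "t \<le> r"
  shows "(\<lambda>x. norm (P x) * t ^ fst x * t ^ snd x) summable_on UNIV"
    and "(\<Sum>\<^sub>\<infinity>x. norm (P x) * t ^ fst x * t ^ snd x) \<le> t / r * (\<Sum>\<^sub>\<infinity>x. norm (P x) * r ^ fst x * r ^ snd x)"
proof -
  have pt: "norm (P x) * t ^ fst x * t ^ snd x \<le> t / r * (norm (P x) * r ^ fst x * r ^ snd x)" for x
  proof (cases "x = (0, 0)")
    case False
    then have "1 \<le> fst x + snd x" by (cases x) auto
    from power_le_scaled[OF t r this]
    have "norm (P x) * (t ^ fst x * t ^ snd x) \<le> norm (P x) * (t / r * (r ^ fst x * r ^ snd x))"
      unfolding power_add by (intro mult_left_mono) auto
    then show ?thesis by (simp add: mult_ac)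
  qed (simp add: P0)
  have sm': "(\<lambda>x. t / r * (norm (P x) * r ^ fst x * r ^ snd x)) summable_on UNIV"
    by (rule summable_on_cmult_right[OF sm])
  show sm_t: "(\<lambda>x. norm (P x) * t ^ fst x * t ^ snd x) summable_on UNIV"
    by (rule summable_on_comparison_test[OF sm']) (use pt t in auto)
  have "(\<Sum>\<^sub>\<infinity>x. norm (P x) * t ^ fst x * t ^ snd x) \<le> (\<Sum>\<^sub>\<infinity>x. t / r * (norm (P x) * r ^ fst x * r ^ snd x))"
    by (rule infsum_mono[OF sm_t sm' pt])
  also have "\<dots> = t / r * (\<Sum>\<^sub>\<infinity>x. norm (P x) * r ^ fst x * r ^ snd x)"
    by (rule infsum_cmult_right')
  finally show "(\<Sum>\<^sub>\<infinity>x. norm (P x) * t ^ fst x * t ^ snd x) \<le> t / r * (\<Sum>\<^sub>\<infinity>x. norm (P x) * r ^ fst x * r ^ snd x)" .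
qed

text \<open>Because P has no constant term, its absolute sum on the polydisc of radius t
  is O(t) as t tends to 0.\<close>
lemma ps_expansion_norm_sum_small:
  assumes P: "ps_expansion P Pf r" and P0: "P (0, 0) = 0" and \<rho>: "\<rho> > 0"
  obtains s where "0 < s" "s < r"
    and "\<And>t. 0 \<le> t \<Longrightarrow> t \<le> s \<Longrightarrow>
           \<exists>Pt. ((\<lambda>x. norm (P x) * t ^ fst x * t ^ snd x) has_sum Pt) UNIV \<and> Pt < \<rho>"
proof -
  define r0 where "r0 = r / 2"
  have r0: "0 < r0" "r0 < r" using P by (auto simp: r0_def ps_expansion_def)
  have "ps_has_sum P (of_real r0) (of_real r0) (Pf (of_real r0) (of_real r0))"
    by (rule ps_expansionD[OF P]) (use r0 in auto)
  from ps_has_sum_abs_summable[OF this]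
  have sm: "(\<lambda>x. norm (P x) * r0 ^ fst x * r0 ^ snd x) summable_on UNIV"
    using r0 by (simp add: norm_mult norm_power)
  define M where "M = (\<Sum>\<^sub>\<infinity>x. norm (P x) * r0 ^ fst x * r0 ^ snd x)"
  have M: "M \<ge> 0" unfolding M_def by (intro infsum_nonneg) (use r0 in auto)
  define s where "s = min r0 (r0 * \<rho> / (M + 1))"
  have s: "0 < s" "s \<le> r0" using r0 \<rho> M by (auto simp: s_def)
  have sM: "s / r0 * M < \<rho>"
  proof -
    have "s / r0 \<le> r0 * \<rho> / (M + 1) / r0"
      using r0 by (intro divide_right_mono) (auto simp: s_def)
    then have "s / r0 \<le> \<rho> / (M + 1)" using r0 by simp
    then have "s / r0 * M \<le> \<rho> / (M + 1) * M" using M by (intro mult_right_mono) auto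
    also have "\<dots> < \<rho>" using M \<rho> by (simp add: divide_simps)
    finally show ?thesis .
  qed
  have bound: "\<exists>Pt. ((\<lambda>x. norm (P x) * t ^ fst x * t ^ snd x) has_sum Pt) UNIV \<and> Pt \<le> s / r0 * M"
    if t: "0 \<le> t" "t \<le> s" for t
  proof -
    note scaled = ps_norm_sum_le_scaled[OF P0 r0(1) sm t(1) order_trans[OF t(2) s(2)]]
    have "t / r0 * M \<le> s / r0 * M" using t r0 M by (intro mult_right_mono divide_right_mono) auto
    with scaled(2) have "(\<Sum>\<^sub>\<infinity>x. norm (P x) * t ^ fst x * t ^ snd x) \<le> s / r0 * M"
      unfolding M_def by linarith
    with has_sum_infsum[OF scaled(1)] show ?thesis by blast
  qed
  show ?thesis
  proof (rule that)
    show "0 < s" "s < r" using s r0 by auto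
    fix t assume "0 \<le> t" "t \<le> s"
    with bound sM show "\<exists>Pt. ((\<lambda>x. norm (P x) * t ^ fst x * t ^ snd x) has_sum Pt) UNIV \<and> Pt < \<rho>"
      by force
  qed
qed

lemma ps_expansion_subst:
  assumes b: "ps_expansion b G rb" and P: "ps_expansion P Pf rP" and R: "ps_expansion R Rf rR"
    and P0: "P (0, 0) = 0" and R0: "R (0, 0) = 0"
  obtains r where "ps_expansion (ps_subst b P R) (\<lambda>z w. G (Pf z w) (Rf z w)) r"
proof -
  have rb: "rb > 0" using b by (simp add: ps_expansion_def)
  obtain sP where sP: "0 < sP" "sP < rP" and smallP: "\<And>t. 0 \<le> t \<Longrightarrow> t \<le> sP \<Longrightarrow>
      \<exists>Pt. ((\<lambda>x. norm (P x) * t ^ fst x * t ^ snd x) has_sum Pt) UNIV \<and> Pt < rb"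
    using ps_expansion_norm_sum_small[OF P P0 rb] by blast
  obtain sR where sR: "0 < sR" "sR < rR" and smallR: "\<And>t. 0 \<le> t \<Longrightarrow> t \<le> sR \<Longrightarrow>
      \<exists>Rt. ((\<lambda>x. norm (R x) * t ^ fst x * t ^ snd x) has_sum Rt) UNIV \<and> Rt < rb"
    using ps_expansion_norm_sum_small[OF R R0 rb] by blast
  define s where "s = min sP sR"
  obtain Pt where Pt: "((\<lambda>x. norm (P x) * s ^ fst x * s ^ snd x) has_sum Pt) UNIV" "Pt < rb"
    using smallP[of s] sP sR by (auto simp: s_def)
  obtain Rt where Rt: "((\<lambda>x. norm (R x) * s ^ fst x * s ^ snd x) has_sum Rt) UNIV" "Rt < rb"
    using smallR[of s] sP sR by (auto simp: s_def)
  have nonneg: "0 \<le> Pt" "0 \<le> Rt"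
    using has_sum_nonneg[OF Pt(1)] has_sum_nonneg[OF Rt(1)] sP sR by (auto simp: s_def)
  have "ps_expansion (ps_subst b P R) (\<lambda>z w. G (Pf z w) (Rf z w)) s"
    unfolding ps_expansion_def
  proof (intro conjI allI impI)
    show "0 < s" using sP sR by (simp add: s_def)
    fix z w :: complex assume z: "norm z < s" and w: "norm w < s"
    have hP: "ps_has_sum P z w (Pf z w)" and hR: "ps_has_sum R z w (Rf z w)"
      using z w sP sR by (auto intro!: ps_expansionD[OF P] ps_expansionD[OF R] simp: s_def)
    have "norm (Pf z w) \<le> Pt" "norm (Rf z w) \<le> Rt"
      using ps_has_sum_norm_le[OF hP _ _ Pt(1)] ps_has_sum_norm_le[OF hR _ _ Rt(1)] z w by auto
    then have hb: "ps_has_sum b (Pf z w) (Rf z w) (G (Pf z w) (Rf z w))"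
      using Pt(2) Rt(2) by (intro ps_expansionD[OF b]) auto
    have hbt: "ps_has_sum b (of_real Pt) (of_real Rt) (G (of_real Pt) (of_real Rt))"
      using Pt(2) Rt(2) nonneg by (intro ps_expansionD[OF b]) auto
    show "ps_has_sum (ps_subst b P R) z w (G (Pf z w) (Rf z w))"
      by (rule ps_has_sum_subst[OF P0 R0 hP hR _ _ Pt(1) Rt(1) hbt hb]) (use z w in auto)
  qed
  then show ?thesis by (rule that)
qed

section \<open>Taylor coefficients\<close>

lemma higher_deriv_powser_0:
  fixes c :: "nat \<Rightarrow> complex"
  assumes r: "r > 0" and sums: "\<And>z. norm z < r \<Longrightarrow> (\<lambda>k. c k * z ^ k) sums f z"
  shows "(deriv ^^ n) f 0 = fact n * c n"
proof -
  have "summable (\<lambda>k. c k * (complex_of_real (r / 2)) ^ k)"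
    using sums[of "complex_of_real (r / 2)"] r by (auto simp: sums_iff)
  then have "conv_radius c \<ge> norm (complex_of_real (r / 2))" by (rule conv_radius_geI)
  then have "fps_conv_radius (Abs_fps c) > 0"
    using r by (simp add: fps_conv_radius_def) (metis ereal_less(2) half_gt_zero less_le_trans)
  moreover have "eventually (\<lambda>z. eval_fps (Abs_fps c) z = f z) (nhds 0)"
  proof -
    have "eventually (\<lambda>z. z \<in> ball 0 r) (nhds (0::complex))"
      using r by (intro eventually_nhds_in_open) auto
    then show ?thesis
      by eventually_elim (use sums in \<open>auto simp: eval_fps_def sums_iff\<close>)
  qed
  ultimately have "f has_fps_expansion Abs_fps c"
    unfolding has_fps_expansion_def by auto
  from fps_nth_fps_expansion[OF this, of n] show ?thesis by simp
qed

lemma ps_has_sum_rows: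
  assumes "ps_has_sum A z w S"
  shows "((\<lambda>j. (\<Sum>\<^sub>\<infinity>i. A (i, j) * z ^ i) * w ^ j) has_sum S) UNIV"
    and "(\<lambda>i. A (i, j) * z ^ i * w ^ j) summable_on UNIV"
proof -
  have "((\<lambda>(j, i). A (i, j) * z ^ i * w ^ j) has_sum S) (UNIV \<times> UNIV)"
    using assms has_sum_swap[where f = "\<lambda>(i, j). A (i, j) * z ^ i * w ^ j" and S = S and A = UNIV and B = UNIV]
    by (simp add: ps_has_sum_def case_prod_unfold)
  then have h: "((\<lambda>(j, i). A (i, j) * z ^ i * w ^ j) has_sum S) (Sigma UNIV (\<lambda>_. UNIV))" by simp
  have inner: "(\<lambda>i. A (i, j) * z ^ i * w ^ j) summable_on UNIV" for j
    using summable_on_SigmaD1[of "\<lambda>j i. A (i, j) * z ^ i * w ^ j", OF h[THEN has_sum_imp_summable]]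
    by auto
  then show "(\<lambda>i. A (i, j) * z ^ i * w ^ j) summable_on UNIV" .
  have "((\<lambda>j. \<Sum>\<^sub>\<infinity>i. A (i, j) * z ^ i * w ^ j) has_sum S) UNIV"
    by (rule has_sum_Sigma'[OF h]) (use inner in \<open>auto intro: has_sum_infsum\<close>)
  then show "((\<lambda>j. (\<Sum>\<^sub>\<infinity>i. A (i, j) * z ^ i) * w ^ j) has_sum S) UNIV"
    by (simp add: infsum_cmult_left')
qed

lemma coeff2_ps_expansion:
  assumes A: "ps_expansion A g r"
  shows "coeff2 g i j = A (i, j)"
proof -
  have r: "r > 0" using A by (simp add: ps_expansion_def)
  define C where "C j z = (\<Sum>\<^sub>\<infinity>i. A (i, j) * z ^ i)" for j z
  define w where "w = complex_of_real (r / 2)"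
  have w: "norm w < r" "w \<noteq> 0" using r by (auto simp: w_def)
  have rows: "ps_has_sum A z w' (g z w')" if "norm z < r" "norm w' < r" for z w'
    using ps_expansionD[OF A that] .
  have dw: "(deriv ^^ j) (g z) 0 = fact j * C j z" if z: "norm z < r" for z
    by (rule higher_deriv_powser_0[OF r])
      (use ps_has_sum_rows(1)[OF rows[OF z]] in \<open>auto simp: C_def intro: has_sum_imp_sums\<close>)
  have Cs: "(\<lambda>i. A (i, j) * z ^ i) sums C j z" if z: "norm z < r" for z
  proof -
    have "(\<lambda>i. (A (i, j) * z ^ i * w ^ j) * inverse (w ^ j)) summable_on UNIV"
      by (rule summable_on_cmult_left[OF ps_has_sum_rows(2)[OF rows[OF z w(1)]]])
    then have "(\<lambda>i. A (i, j) * z ^ i) summable_on UNIV" using w by (simp add: field_simps)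
    then show ?thesis unfolding C_def by (intro has_sum_imp_sums has_sum_infsum)
  qed
  have "eventually (\<lambda>z. (deriv ^^ j) (g z) 0 = fact j * C j z) (nhds 0)"
  proof -
    have "eventually (\<lambda>z. z \<in> ball 0 r) (nhds (0::complex))"
      using r by (intro eventually_nhds_in_open) auto
    then show ?thesis by eventually_elim (use dw in auto)
  qed
  then have "(deriv ^^ i) (\<lambda>z. (deriv ^^ j) (g z) 0) 0 = (deriv ^^ i) (\<lambda>z. fact j * C j z) 0"
    by (rule higher_deriv_cong_ev) simp
  also have "\<dots> = fact i * (fact j * A (i, j))"
    by (rule higher_deriv_powser_0[OF r]) (use Cs in \<open>auto intro: sums_mult simp: mult.assoc\<close>)
  finally show ?thesis unfolding coeff2_def by simp
qed

section \<open>Extreme points of the Newton polygon\<close>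

lemma convex_comb_ge:
  fixes a b m u v :: real
  assumes "u * m \<le> u * a" "v * m \<le> v * b" "u + v = 1"
  shows "m \<le> u * a + v * b" and "u * a + v * b = m \<Longrightarrow> u * a = u * m \<and> v * b = v * m"
proof -
  have "u * m + v * m = m" using assms(3) by (metis distrib_right mult_1)
  then show "m \<le> u * a + v * b" "u * a + v * b = m \<Longrightarrow> u * a = u * m \<and> v * b = v * m"
    using assms(1,2) by linarith+
qed

lemma lexmin_convex_combination:
  fixes \<phi> g :: "'a::real_vector \<Rightarrow> real" and p :: 'a
  defines "K \<equiv> {u. \<phi> p \<le> \<phi> u \<and> (\<phi> u = \<phi> p \<longrightarrow> g p \<le> g u)
                   \<and> (\<phi> u = \<phi> p \<and> g u = g p \<longrightarrow> u = p)}"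
  assumes lin: "linear \<phi>" "linear g" and x: "x \<in> K" and y: "y \<in> K"
    and uv: "0 \<le> u" "0 \<le> v" "u + v = 1"
  shows "u *\<^sub>R x + v *\<^sub>R y \<in> K"
    and "u *\<^sub>R x + v *\<^sub>R y = p \<Longrightarrow> (u = 0 \<or> x = p) \<and> (v = 0 \<or> y = p)"
proof -
  let ?c = "u *\<^sub>R x + v *\<^sub>R y"
  have \<phi>c: "\<phi> ?c = u * \<phi> x + v * \<phi> y" and gc: "g ?c = u * g x + v * g y"
    using lin by (simp_all add: linear_add linear_scale)
  have "u * \<phi> p \<le> u * \<phi> x" "v * \<phi> p \<le> v * \<phi> y"
    using x y uv by (auto simp: K_def intro: mult_left_mono)
  note \<phi>comb = convex_comb_ge[OF this uv(3)]
  have g_le: "u * g p \<le> u * g x \<and> v * g p \<le> v * g y" if "\<phi> ?c = \<phi> p"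
  proof -
    have "(u = 0 \<or> \<phi> x = \<phi> p) \<and> (v = 0 \<or> \<phi> y = \<phi> p)"
      using \<phi>comb(2) that \<phi>c by auto
    then show ?thesis using x y uv by (auto simp: K_def intro: mult_left_mono)
  qed
  have tie: "(u = 0 \<or> x = p) \<and> (v = 0 \<or> y = p)" if eq: "\<phi> ?c = \<phi> p" "g ?c = g p"
  proof -
    have "(u = 0 \<or> \<phi> x = \<phi> p) \<and> (v = 0 \<or> \<phi> y = \<phi> p)"
      using \<phi>comb(2) eq(1) \<phi>c by auto
    moreover from convex_comb_ge(2)[OF conjunct1[OF g_le[OF eq(1)]] conjunct2[OF g_le[OF eq(1)]] uv(3)] eq(2) gc
    have "(u = 0 \<or> g x = g p) \<and> (v = 0 \<or> g y = g p)" by auto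
    ultimately show ?thesis using x y by (auto simp: K_def)
  qed
  show "(u = 0 \<or> x = p) \<and> (v = 0 \<or> y = p)" if "?c = p"
    by (rule tie) (simp_all add: that)
  have "?c = p" if "\<phi> ?c = \<phi> p" "g ?c = g p"
  proof -
    have "u *\<^sub>R x = u *\<^sub>R p" "v *\<^sub>R y = v *\<^sub>R p" using tie[OF that] by auto
    then show ?thesis using uv(3) by (metis scaleR_add_left scaleR_one)
  qed
  moreover have "g p \<le> g ?c" if "\<phi> ?c = \<phi> p"
    using convex_comb_ge(1)[OF conjunct1[OF g_le[OF that]] conjunct2[OF g_le[OF that]] uv(3)]
    by (simp add: gc)
  ultimately show "?c \<in> K" using \<phi>comb(1) \<phi>c by (auto simp: K_def)
qed

lemma extreme_point_of_convex_hull_lexmin: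
  fixes \<phi> g :: "'a::real_vector \<Rightarrow> real"
  assumes lin: "linear \<phi>" "linear g" and p: "p \<in> U"
    and min1: "\<And>u. u \<in> U \<Longrightarrow> \<phi> p \<le> \<phi> u"
    and min2: "\<And>u. u \<in> U \<Longrightarrow> \<phi> u = \<phi> p \<Longrightarrow> g p \<le> g u"
    and unique: "\<And>u. u \<in> U \<Longrightarrow> \<phi> u = \<phi> p \<Longrightarrow> g u = g p \<Longrightarrow> u = p"
  shows "p extreme_point_of convex hull U"
proof -
  define K where "K = {u. \<phi> p \<le> \<phi> u \<and> (\<phi> u = \<phi> p \<longrightarrow> g p \<le> g u)
                          \<and> (\<phi> u = \<phi> p \<and> g u = g p \<longrightarrow> u = p)}"
  note comb = lexmin_convex_combination[where p = p, OF lin, folded K_def]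
  have "convex K"
    unfolding convex_def
  proof (intro ballI allI impI)
    fix x y :: 'a and u v :: real
    assume "x \<in> K" "y \<in> K" "0 \<le> u" "0 \<le> v" "u + v = 1"
    then show "u *\<^sub>R x + v *\<^sub>R y \<in> K" by (rule comb(1))
  qed
  moreover have "U \<subseteq> K" using min1 min2 unique by (auto simp: K_def)
  ultimately have hull: "convex hull U \<subseteq> K" by (rule hull_minimal[rotated])
  show ?thesis
    unfolding extreme_point_of_def
  proof (intro conjI ballI notI)
    show "p \<in> convex hull U" using p by (rule hull_inc)
    fix a c assume "a \<in> convex hull U" "c \<in> convex hull U" "p \<in> open_segment a c"
    then obtain t where ac: "a \<noteq> c" and t: "0 < t" "t < 1"
      and p_eq: "(1 - t) *\<^sub>R a + t *\<^sub>R c = p" and "a \<in> K" "c \<in> K"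
      using hull unfolding in_segment by auto
    from comb(2)[OF \<open>a \<in> K\<close> \<open>c \<in> K\<close> _ _ _ p_eq] t have "a = p" "c = p" by auto
    with ac show False by simp
  qed
qed

definition newton_region :: "(nat \<Rightarrow> nat \<Rightarrow> complex) \<Rightarrow> (real \<times> real) set" where
  "newton_region b = \<Union>{{(x, y). x \<ge> real i \<and> y \<ge> real j} | i j. b i j \<noteq> 0}"

lemma mem_newton_region:
  "u \<in> newton_region b \<longleftrightarrow> (\<exists>i j. b i j \<noteq> 0 \<and> real i \<le> fst u \<and> real j \<le> snd u)"
  unfolding newton_region_def by (cases u) auto

lemma newton_polygon_eq_hull: "newton_polygon b = convex hull (newton_region b)"
  unfolding newton_polygon_def newton_region_def ..

lemma support_in_newton_polygon: "b i j \<noteq> 0 \<Longrightarrow> (real i, real j) \<in> newton_polygon b"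
  unfolding newton_polygon_eq_hull by (rule hull_inc) (auto simp: mem_newton_region)

lemma newton_polygon_upward:
  assumes "x \<in> newton_polygon b" "0 \<le> fst v" "0 \<le> snd v"
  shows "v + x \<in> newton_polygon b"
proof -
  have "(+) v ` newton_region b \<subseteq> newton_region b"
    using assms(2,3) by (force simp: mem_newton_region)
  then have "convex hull ((+) v ` newton_region b) \<subseteq> convex hull newton_region b"
    by (rule hull_mono)
  then show ?thesis
    using assms(1) unfolding newton_polygon_eq_hull convex_hull_translation by auto
qed

lemma midpoint_not_extreme_point:
  assumes "a \<in> S" "c \<in> S" "a \<noteq> c"
  shows "\<not> midpoint a c extreme_point_of S"
  unfolding extreme_point_of_def using assms by (metis midpoint_in_open_segment)

lemma extreme_point_newton_polygon_dominated:
  assumes ext: "v extreme_point_of newton_polygon b" and b: "b i j \<noteq> 0"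
    and le: "real i \<le> fst v" "real j \<le> snd v"
  shows "v = (real i, real j)"
proof (rule ccontr)
  assume ne: "v \<noteq> (real i, real j)"
  define p where "p = (real i, real j)"
  define dv where "dv = v - p"
  have dv: "fst dv \<ge> 0" "snd dv \<ge> 0" "dv \<noteq> 0"
    using le ne by (auto simp: dv_def p_def prod_eq_iff)
  have p: "p \<in> newton_polygon b" using b by (simp add: p_def support_in_newton_polygon)
  have "(1/2) *\<^sub>R dv + p \<in> newton_polygon b" "(3/2) *\<^sub>R dv + p \<in> newton_polygon b"
    using dv by (auto intro!: newton_polygon_upward[OF p])
  moreover have "(1/2) *\<^sub>R dv + p \<noteq> (3/2) *\<^sub>R dv + p" using dv(3) by auto
  moreover have "v = midpoint ((1/2) *\<^sub>R dv + p) ((3/2) *\<^sub>R dv + p)"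
    by (simp add: midpoint_def dv_def prod_eq_iff field_simps)
  ultimately show False using midpoint_not_extreme_point ext by metis
qed

lemma extreme_point_newton_polygon_support:
  assumes ext: "v extreme_point_of newton_polygon b"
  obtains i j where "b i j \<noteq> 0" "v = (real i, real j)"
proof -
  have "v \<in> newton_region b"
    using extreme_point_of_convex_hull ext unfolding newton_polygon_eq_hull by blast
  then obtain i j where "b i j \<noteq> 0" "real i \<le> fst v" "real j \<le> snd v"
    by (auto simp: mem_newton_region)
  with extreme_point_newton_polygon_dominated[OF ext] that show ?thesis by blast
qed

lemma linear_fst_plus_snd: "linear (\<lambda>p :: real \<times> real. fst p + L * snd p)"
  by (rule linearI) (simp_all add: algebra_simps)

lemma newton_leftmost_vertex:
  assumes v1: "(real \<gamma>, real d) extreme_point_of newton_polygon b"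
    and v12: "\<gamma> < n2"
    and v_left: "\<forall>v. v extreme_point_of newton_polygon b \<longrightarrow> v \<noteq> (real \<gamma>, real d) \<longrightarrow> fst v \<ge> real n2"
  shows "b \<gamma> d \<noteq> 0" and "b i j \<noteq> 0 \<Longrightarrow> \<gamma> \<le> i"
proof -
  show b\<gamma>d: "b \<gamma> d \<noteq> 0"
    using v1 by (rule extreme_point_newton_polygon_support) auto
  define i0 where "i0 = (LEAST i. \<exists>j. b i j \<noteq> 0)"
  have ex: "\<exists>j. b i0 j \<noteq> 0" unfolding i0_def by (rule LeastI[of _ \<gamma>]) (use b\<gamma>d in auto)
  have i0_le: "i0 \<le> i" if "b i j \<noteq> 0" for i j
    unfolding i0_def by (rule Least_le) (use that in auto)
  define j0 where "j0 = (LEAST j. b i0 j \<noteq> 0)"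
  have bj0: "b i0 j0 \<noteq> 0" unfolding j0_def using ex by (rule LeastI_ex)
  have j0_le: "j0 \<le> j" if "b i0 j \<noteq> 0" for j
    unfolding j0_def by (rule Least_le) (use that in auto)
  have "(real i0, real j0) extreme_point_of newton_polygon b"
    unfolding newton_polygon_eq_hull
  proof (rule extreme_point_of_convex_hull_lexmin[where \<phi> = fst and g = snd])
    show "linear (fst :: real \<times> real \<Rightarrow> real)" "linear (snd :: real \<times> real \<Rightarrow> real)"
      using linear_fst_plus_snd[of 0] linear_fst_plus_snd[of 1] by (simp_all add: linear_fst linear_snd)
    show "(real i0, real j0) \<in> newton_region b" using bj0 by (auto simp: mem_newton_region)
    fix u assume "u \<in> newton_region b"
    then obtain i j where ij: "b i j \<noteq> 0" "real i \<le> fst u" "real j \<le> snd u"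
      by (auto simp: mem_newton_region)
    with i0_le show "fst (real i0, real j0) \<le> fst u" by force
    assume "fst u = fst (real i0, real j0)"
    with ij i0_le[OF ij(1)] have "i = i0" by simp
    with ij j0_le show "snd (real i0, real j0) \<le> snd u" by force
    assume "snd u = snd (real i0, real j0)"
    with \<open>fst u = _\<close> show "u = (real i0, real j0)" by (simp add: prod_eq_iff)
  qed
  with v_left i0_le[OF b\<gamma>d] v12 have "i0 = \<gamma>" by force
  with i0_le show "b i j \<noteq> 0 \<Longrightarrow> \<gamma> \<le> i" by blast
qed

lemma newton_second_vertex_lower:
  assumes v1: "(real \<gamma>, real d) extreme_point_of newton_polygon b"
    and v2: "(real n2, real m2) extreme_point_of newton_polygon b" and v12: "\<gamma> < n2"
  shows "m2 < d"
proof (rule ccontr)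
  assume "\<not> m2 < d"
  moreover have "b \<gamma> d \<noteq> 0" using v1 by (rule extreme_point_newton_polygon_support) auto
  ultimately have "(real n2, real m2) = (real \<gamma>, real d)"
    using extreme_point_newton_polygon_dominated[OF v2] v12 by simp
  with v12 show False by simp
qed

lemma finite_wdeg_le:
  assumes L: "L > 0"
  shows "finite {x. wdeg L x \<le> c}"
proof (rule finite_subset)
  show "{x. wdeg L x \<le> c} \<subseteq> {..nat \<lceil>c\<rceil>} \<times> {..nat \<lceil>c / L\<rceil>}"
  proof
    fix x assume "x \<in> {x. wdeg L x \<le> c}"
    then have x: "real (fst x) + L * real (snd x) \<le> c" by (simp add: wdeg_def)
    then have "real (fst x) \<le> c" "real (snd x) \<le> c / L"
      using L by (auto simp: pos_le_divide_eq mult.commute intro: order_trans[OF _ x])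
    then show "x \<in> {..nat \<lceil>c\<rceil>} \<times> {..nat \<lceil>c / L\<rceil>}"
      by (cases x) (auto simp: le_nat_iff le_ceiling_iff)
  qed
qed simp

lemma support_wdeg_lexmin:
  assumes L: "L > 0" and bij: "b i j \<noteq> 0"
  obtains s where "b (fst s) (snd s) \<noteq> 0"
    and "\<And>x. b (fst x) (snd x) \<noteq> 0 \<Longrightarrow> wdeg L s \<le> wdeg L x"
    and "\<And>x. b (fst x) (snd x) \<noteq> 0 \<Longrightarrow> wdeg L x = wdeg L s \<Longrightarrow> fst s \<le> fst x"
proof -
  define c where "c = wdeg L (i, j)"
  define M where "M = {x. b (fst x) (snd x) \<noteq> 0 \<and> wdeg L x \<le> c}"
  have fin: "finite M"
    using finite_wdeg_le[OF L, of c] by (rule finite_subset[rotated]) (auto simp: M_def)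
  have ijM: "(i, j) \<in> M" using bij by (simp add: M_def c_def)
  define m where "m = Min (wdeg L ` M)"
  have m_c: "m \<le> c" using fin ijM by (auto simp: m_def c_def intro: Min_le)
  have m_le: "m \<le> wdeg L x" if "b (fst x) (snd x) \<noteq> 0" for x
  proof (cases "x \<in> M")
    case True then show ?thesis using fin by (simp add: m_def)
  next
    case False
    then have "c < wdeg L x" using that by (auto simp: M_def)
    with m_c show ?thesis by simp
  qed
  define M1 where "M1 = {x \<in> M. wdeg L x = m}"
  have "m \<in> wdeg L ` M" unfolding m_def using fin ijM by (intro Min_in) auto
  then have "finite M1" "M1 \<noteq> {}" using fin by (auto simp: M1_def)
  then have "Min (fst ` M1) \<in> fst ` M1" by (intro Min_in) auto
  then obtain s where sM1: "s \<in> M1" and s_min: "fst s = Min (fst ` M1)" by auto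
  have ms: "wdeg L s = m" using sM1 by (simp add: M1_def)
  show ?thesis
  proof (rule that[of s])
    show "b (fst s) (snd s) \<noteq> 0" using sM1 by (simp add: M1_def M_def)
    show "wdeg L s \<le> wdeg L x" if "b (fst x) (snd x) \<noteq> 0" for x
      using m_le[OF that] ms by simp
    show "fst s \<le> fst x" if "b (fst x) (snd x) \<noteq> 0" "wdeg L x = wdeg L s" for x
    proof -
      have "x \<in> M1" using that ms m_c by (simp add: M1_def M_def)
      with \<open>finite M1\<close> show ?thesis by (simp add: s_min)
    qed
  qed
qed

lemma newton_polygon_wdeg_min_vertex:
  assumes L: "L > 0" and bij: "b i j \<noteq> 0"
  obtains i' j' where "(real i', real j') extreme_point_of newton_polygon b"
    and "b i' j' \<noteq> 0" and "\<And>i j. b i j \<noteq> 0 \<Longrightarrow> wdeg L (i', j') \<le> wdeg L (i, j)"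
proof -
  obtain s where bs: "b (fst s) (snd s) \<noteq> 0"
    and min: "\<And>x. b (fst x) (snd x) \<noteq> 0 \<Longrightarrow> wdeg L s \<le> wdeg L x"
    and tie: "\<And>x. b (fst x) (snd x) \<noteq> 0 \<Longrightarrow> wdeg L x = wdeg L s \<Longrightarrow> fst s \<le> fst x"
    by (rule support_wdeg_lexmin[of L b, OF L bij]) (rule that)
  show ?thesis
  proof (rule that[of "fst s" "snd s"])
    show "b (fst s) (snd s) \<noteq> 0" by (rule bs)
    show "wdeg L (fst s, snd s) \<le> wdeg L (i', j')" if "b i' j' \<noteq> 0" for i' j'
      using min[of "(i', j')"] that by simp
    show "(real (fst s), real (snd s)) extreme_point_of newton_polygon b"
      unfolding newton_polygon_eq_hull
    proof (rule extreme_point_of_convex_hull_lexmin[OF linear_fst_plus_snd[of L], where g = fst])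
      show "linear (fst :: real \<times> real \<Rightarrow> real)"
        using linear_fst_plus_snd[of 0] by simp
      show "(real (fst s), real (snd s)) \<in> newton_region b" using bs by (auto simp: mem_newton_region)
      fix u assume "u \<in> newton_region b"
      then obtain i' j' where ij: "b i' j' \<noteq> 0" "real i' \<le> fst u" "real j' \<le> snd u"
        by (auto simp: mem_newton_region)
      have ps: "wdeg L (i', j') \<le> fst u + L * snd u"
        using ij L unfolding wdeg_def by (simp add: add_mono mult_left_mono)
      have mij: "wdeg L s \<le> wdeg L (i', j')" using min[of "(i', j')"] ij by simp
      show "fst (real (fst s), real (snd s)) + L * snd (real (fst s), real (snd s)) \<le> fst u + L * snd u"
        using mij ps by (simp add: wdeg_def)
      assume eq: "fst u + L * snd u = fst (real (fst s), real (snd s)) + L * snd (real (fst s), real (snd s))"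
      then have "fst u + L * snd u = wdeg L s" by (simp add: wdeg_def)
      with mij ps have m_eq: "wdeg L (i', j') = wdeg L s" by linarith
      have "0 \<le> fst u - real i'" "0 \<le> L * (snd u - real j')" using ij L by auto
      moreover have "(fst u - real i') + L * (snd u - real j') = 0"
        using m_eq \<open>fst u + L * snd u = wdeg L s\<close> by (simp add: wdeg_def algebra_simps)
      ultimately have "fst u = real i'" "L * (snd u - real j') = 0" by linarith+
      then have u: "fst u = real i'" "snd u = real j'" using L by auto
      show "fst (real (fst s), real (snd s)) \<le> fst u" using tie[of "(i', j')"] ij m_eq u by simp
      assume "fst u = fst (real (fst s), real (snd s))"
      with u eq L show "u = (real (fst s), real (snd s))" by (simp add: prod_eq_iff)
    qed
  qed
qed

lemma newton_polygon_above_segment: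
  fixes A S :: "real \<times> real"
  assumes A: "A \<in> newton_polygon b" and S: "S \<in> newton_polygon b" and L: "0 < L"
    and left: "fst A < x2" and right: "x2 \<le> fst S"
    and on_line: "fst A + L * snd A = x2 + L * y2"
    and below: "fst S + L * snd S < fst A + L * snd A"
  shows "\<not> (x2, y2) extreme_point_of newton_polygon b"
proof -
  define t where "t = (x2 - fst A) / (fst S - fst A)"
  have t: "0 < t" "t \<le> 1" using left right by (auto simp: t_def)
  define Q where "Q = (1 - t) *\<^sub>R A + t *\<^sub>R S"
  have Q: "Q \<in> newton_polygon b"
    using A S t unfolding Q_def newton_polygon_eq_hull by (intro convexD[OF convex_convex_hull]) auto
  have "t * (fst S - fst A) = x2 - fst A" using left right by (simp add: t_def)
  then have fQ: "fst Q = x2" by (simp add: Q_def algebra_simps)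
  have "fst Q + L * snd Q = (1 - t) * (fst A + L * snd A) + t * (fst S + L * snd S)"
    by (simp add: Q_def algebra_simps)
  also have "\<dots> < (1 - t) * (fst A + L * snd A) + t * (fst A + L * snd A)"
    using t below by simp
  finally have "snd Q < y2" using fQ on_line L by (simp add: algebra_simps)
  define e where "e = y2 - snd Q"
  have e: "e > 0" using \<open>snd Q < y2\<close> by (simp add: e_def)
  have "(0, 2 * e) + Q \<in> newton_polygon b"
    by (rule newton_polygon_upward[OF Q]) (use e in auto)
  moreover have "Q \<noteq> (0, 2 * e) + Q" using e by (simp add: prod_eq_iff)
  moreover have "(x2, y2) = midpoint Q ((0, 2 * e) + Q)"
    using fQ by (simp add: midpoint_def e_def prod_eq_iff field_simps)
  ultimately show ?thesis using midpoint_not_extreme_point[OF Q] by simp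
qed

text \<open>Otherwise the support point of least weight below the line through the first two
  vertices gives a vertex S to the right of (n2, m2), and (n2, m2) would lie strictly
  above the segment from (\<gamma>, d) to S.\<close>
lemma newton_first_edge:
  fixes b :: "nat \<Rightarrow> nat \<Rightarrow> complex" and \<gamma> d n2 m2 :: nat
  defines "L \<equiv> (real n2 - real \<gamma>) / (real d - real m2)"
  assumes v1: "(real \<gamma>, real d) extreme_point_of newton_polygon b"
    and v2: "(real n2, real m2) extreme_point_of newton_polygon b" and v12: "\<gamma> < n2"
    and v_left: "\<forall>v. v extreme_point_of newton_polygon b \<longrightarrow> v \<noteq> (real \<gamma>, real d) \<longrightarrow> fst v \<ge> real n2"
    and bij: "b i j \<noteq> 0"
  shows "wdeg L (\<gamma>, d) \<le> wdeg L (i, j)"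
proof (rule ccontr)
  assume lt: "\<not> ?thesis"
  have md: "m2 < d" by (rule newton_second_vertex_lower[OF v1 v2 v12])
  have L: "L > 0" using v12 md by (simp add: L_def)
  obtain i' j' where ext: "(real i', real j') extreme_point_of newton_polygon b"
    and b': "b i' j' \<noteq> 0" and min: "\<And>i j. b i j \<noteq> 0 \<Longrightarrow> wdeg L (i', j') \<le> wdeg L (i, j)"
    by (rule newton_polygon_wdeg_min_vertex[of L b, OF L bij]) (rule that)
  have below: "wdeg L (i', j') < wdeg L (\<gamma>, d)" using lt min[OF bij] by simp
  then have "(real i', real j') \<noteq> (real \<gamma>, real d)" by (auto simp: wdeg_def)
  from v_left[rule_format, OF ext this] have right: "real n2 \<le> real i'" by simp
  have "\<not> (real n2, real m2) extreme_point_of newton_polygon b"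
  proof (rule newton_polygon_above_segment[OF _ _ L])
    show "(real \<gamma>, real d) \<in> newton_polygon b" "(real i', real j') \<in> newton_polygon b"
      using support_in_newton_polygon newton_leftmost_vertex(1)[OF v1 v12 v_left] b' by auto
    show "fst (real \<gamma>, real d) + L * snd (real \<gamma>, real d) = real n2 + L * real m2"
      using v12 md by (simp add: L_def field_simps)
  qed (use v12 right below in \<open>auto simp: wdeg_def\<close>)
  with v2 show False by contradiction
qed

section \<open>The iterates as formal series\<close>

lemma gamma_seq_0 [simp]: "gamma_seq \<gamma> \<delta> d 0 = 0"
  by (simp add: gamma_seq_def)

lemma gamma_seq_Suc: "gamma_seq \<gamma> \<delta> d (Suc n) = \<delta> ^ n * \<gamma> + d * gamma_seq \<gamma> \<delta> d n"
proof -
  have "(\<Sum>k<Suc n. \<delta> ^ (Suc n - 1 - k) * d ^ k) = \<delta> ^ n + (\<Sum>k<n. \<delta> ^ (n - Suc k) * d ^ Suc k)"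
    by (subst sum.lessThan_Suc_shift) simp
  also have "(\<Sum>k<n. \<delta> ^ (n - Suc k) * d ^ Suc k) = d * (\<Sum>k<n. \<delta> ^ (n - 1 - k) * d ^ k)"
    by (simp add: sum_distrib_left mult_ac)
  finally show ?thesis unfolding gamma_seq_def by (simp add: algebra_simps)
qed

lemma gamma_seq_le:
  assumes "real \<gamma> \<le> l * (real \<delta> - real d)"
  shows "real (gamma_seq \<gamma> \<delta> d n) \<le> l * (real \<delta> ^ n - real d ^ n)"
proof (induction n)
  case (Suc n)
  have "real \<delta> ^ n * real \<gamma> \<le> real \<delta> ^ n * (l * (real \<delta> - real d))"
    using assms by (intro mult_left_mono) auto
  moreover have "real d * real (gamma_seq \<gamma> \<delta> d n) \<le> real d * (l * (real \<delta> ^ n - real d ^ n))"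
    using Suc.IH by (intro mult_left_mono) auto
  ultimately show ?case by (simp add: gamma_seq_Suc algebra_simps)
qed simp

definition ps_of_series1 :: "(nat \<Rightarrow> complex) \<Rightarrow> series2" where
  "ps_of_series1 a x = (if snd x = 0 then a (fst x) else 0)"

definition ps_z :: series2 where
  "ps_z x = (if x = (1, 0) then 1 else 0)"

definition ps_w :: series2 where
  "ps_w x = (if x = (0, 1) then 1 else 0)"

fun skew_series :: "(nat \<Rightarrow> complex) \<Rightarrow> (nat \<Rightarrow> nat \<Rightarrow> complex) \<Rightarrow> nat \<Rightarrow> series2 \<times> series2" where
  "skew_series a b 0 = (ps_z, ps_w)"
| "skew_series a b (Suc n) = (case skew_series a b n of (P, Q) \<Rightarrow>
      (ps_subst (ps_of_series1 a) P Q, ps_subst (case_prod b) P Q))"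

lemma skew_series_zero:
  assumes "a 0 = 0" "b 0 0 = 0"
  shows "fst (skew_series a b n) (0, 0) = 0 \<and> snd (skew_series a b n) (0, 0) = 0"
proof (induction n)
  case 0 show ?case by (simp add: ps_z_def ps_w_def)
next
  case (Suc n)
  obtain P Q where "skew_series a b n = (P, Q)" by fastforce
  with Suc assms show ?case by (simp add: ps_subst_zero ps_of_series1_def)
qed

lemma ps_expansion_z: "ps_expansion ps_z (\<lambda>z w. z) 1"
  unfolding ps_expansion_def ps_has_sum_def
  by (auto intro!: has_sum_finite_neutralI[of "{(1, 0)}"] simp: ps_z_def split: if_splits)

lemma ps_expansion_w: "ps_expansion ps_w (\<lambda>z w. w) 1"
  unfolding ps_expansion_def ps_has_sum_def
  by (auto intro!: has_sum_finite_neutralI[of "{(0, 1)}"] simp: ps_w_def split: if_splits)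

lemma ps_expansion_germ_series2:
  assumes "germ_series2 b q"
  obtains r where "ps_expansion (case_prod b) q r"
  using assms unfolding germ_series2_def ps_expansion_def ps_has_sum_def
  by (auto simp: case_prod_unfold)

lemma ps_expansion_germ_series1:
  assumes "germ_series1 a p"
  obtains r where "ps_expansion (ps_of_series1 a) (\<lambda>z w. p z) r"
proof -
  obtain r where r: "r > 0" and sums: "\<And>z. norm z < r \<Longrightarrow> (\<lambda>k. a k * z ^ k) sums p z"
    using assms unfolding germ_series1_def by blast
  have "ps_expansion (ps_of_series1 a) (\<lambda>z w. p z) (r / 2)"
    unfolding ps_expansion_def
  proof (intro conjI allI impI)
    show "0 < r / 2" using r by simp
    fix z w :: complex assume z: "norm z < r / 2"
    define x where "x = complex_of_real (3 * r / 4)"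
    have "summable (\<lambda>k. a k * x ^ k)" using sums[of x] r by (simp add: x_def sums_iff)
    moreover have "norm z < norm x" using z r by (simp add: x_def)
    ultimately have "summable (\<lambda>k. norm (a k * z ^ k))" by (rule powser_insidea)
    then have "((\<lambda>k. a k * z ^ k) has_sum p z) UNIV"
      by (rule norm_summable_imp_has_sum[OF _ sums]) (use z r in simp)
    then have "((\<lambda>x. ps_of_series1 a x * z ^ fst x * w ^ snd x) has_sum p z) (range (\<lambda>k. (k, 0)))"
      by (subst has_sum_reindex) (auto simp: inj_on_def o_def ps_of_series1_def)
    also have "?this \<longleftrightarrow> ((\<lambda>x. ps_of_series1 a x * z ^ fst x * w ^ snd x) has_sum p z) UNIV"
      by (rule has_sum_cong_neutral) (auto simp: ps_of_series1_def image_iff prod_eq_iff)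
    finally show "ps_has_sum (ps_of_series1 a) z w (p z)" unfolding ps_has_sum_def .
  qed
  then show ?thesis by (rule that)
qed

lemma skew_iter_Suc:
  "skew_iter p q (Suc n) zw = (case skew_iter p q n zw of (z, w) \<Rightarrow> (p z, q z w))"
  by (simp add: skew_iter_def)

lemma skew_series_expansion:
  assumes p: "germ_series1 a p" and q: "germ_series2 b q" and a0: "a 0 = 0" and b0: "b 0 0 = 0"
  shows "\<exists>r. ps_expansion (fst (skew_series a b n)) (\<lambda>z w. fst (skew_iter p q n (z, w))) r
           \<and> ps_expansion (snd (skew_series a b n)) (\<lambda>z w. snd (skew_iter p q n (z, w))) r"
proof (induction n)
  case 0
  show ?case using ps_expansion_z ps_expansion_w by (auto simp: skew_iter_def)
next
  case (Suc n)
  obtain r where P: "ps_expansion (fst (skew_series a b n)) (\<lambda>z w. fst (skew_iter p q n (z, w))) r"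
    and Q: "ps_expansion (snd (skew_series a b n)) (\<lambda>z w. snd (skew_iter p q n (z, w))) r"
    using Suc by blast
  obtain ra where A: "ps_expansion (ps_of_series1 a) (\<lambda>z w. p z) ra"
    using ps_expansion_germ_series1[OF p] .
  obtain rb where B: "ps_expansion (case_prod b) q rb"
    using ps_expansion_germ_series2[OF q] .
  note zero = skew_series_zero[of a b, OF a0 b0, of n]
  obtain r1 where r1: "ps_expansion (ps_subst (ps_of_series1 a) (fst (skew_series a b n)) (snd (skew_series a b n)))
      (\<lambda>z w. p (fst (skew_iter p q n (z, w)))) r1"
    using ps_expansion_subst[OF A P Q] zero by blast
  obtain r2 where r2: "ps_expansion (ps_subst (case_prod b) (fst (skew_series a b n)) (snd (skew_series a b n)))
      (\<lambda>z w. q (fst (skew_iter p q n (z, w))) (snd (skew_iter p q n (z, w)))) r2"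
    using ps_expansion_subst[OF B P Q] zero by blast
  have "0 < min r1 r2" using r1 r2 by (simp add: ps_expansion_def)
  with ps_expansion_mono[OF r1] ps_expansion_mono[OF r2] show ?case
    by (intro exI[of _ "min r1 r2"])
      (auto simp: skew_iter_Suc case_prod_beta split: prod.split)
qed

lemma coeff2_Qn:
  assumes "germ_series1 a p" "germ_series2 b q" "a 0 = 0" "b 0 0 = 0"
  shows "coeff2 (Qn p q n) i j = snd (skew_series a b n) (i, j)"
proof -
  obtain r where "ps_expansion (snd (skew_series a b n)) (\<lambda>z w. snd (skew_iter p q n (z, w))) r"
    using skew_series_expansion[OF assms] by blast
  then show ?thesis
    by (simp add: coeff2_ps_expansion Qn_def[abs_def])
qed

lemma skew_series_Suc_fst:
  "fst (skew_series a b (Suc n)) = ps_subst (ps_of_series1 a) (fst (skew_series a b n)) (snd (skew_series a b n))"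
  by (simp split: prod.split)

lemma skew_series_Suc_snd:
  "snd (skew_series a b (Suc n)) = ps_subst (case_prod b) (fst (skew_series a b n)) (snd (skew_series a b n))"
  by (simp split: prod.split)

lemma ps_subst_series1_order:
  assumes a_low: "\<forall>i<\<delta>. a i = 0" and a_lead: "a \<delta> \<noteq> 0" and \<delta>: "1 \<le> \<delta>"
    and P: "wdeg_ge 0 P (real k)" "P (k, 0) \<noteq> 0" and P0: "P (0, 0) = 0" and R0: "R (0, 0) = 0"
  shows "wdeg_ge 0 (ps_subst (ps_of_series1 a) P R) (real (\<delta> * k))"
    and "ps_subst (ps_of_series1 a) P R (\<delta> * k, 0) \<noteq> 0"
proof -
  have supp: "\<delta> \<le> fst x \<and> snd x = 0" if "ps_of_series1 a x \<noteq> 0" for x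
    using that a_low by (auto simp: ps_of_series1_def split: if_splits) (meson not_le)
  show "wdeg_ge 0 (ps_subst (ps_of_series1 a) P R) (real (\<delta> * k))"
  proof (rule ps_subst_wdeg_ge[OF P(1), where cR = 0])
    show "wdeg_ge 0 R 0" by (simp add: wdeg_ge_def wdeg_def)
    fix x assume "ps_of_series1 a x \<noteq> 0"
    with supp show "real (\<delta> * k) \<le> real (fst x) * real k + real (snd x) * 0"
      by (simp add: mult_right_mono)
  qed
  define E where "E x = (fst x * k, 0 :: nat)" for x :: "nat \<times> nat"
  have "leading_exp 1 (ps_subst (ps_of_series1 a) P R) (E (\<delta>, 0))"
  proof (rule ps_subst_leading_exp[where P = P and R = R and E = E, OF P0 R0])
    have "leading_exp 1 P (k, 0)" using P by (intro leading_exp_of_wdeg_ge_0) auto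
    from leading_exp_pow(1)[OF this]
    show "leading_exp 1 (ps_mul (ps_pow P (fst x)) (ps_pow R (snd x))) (E x)"
      if "ps_of_series1 a x \<noteq> 0" for x
      using supp[OF that] by (simp add: E_def)
    show "ps_of_series1 a (\<delta>, 0) \<noteq> 0" using a_lead by (simp add: ps_of_series1_def)
    show "term_le 1 (E (\<delta>, 0)) (E x)" if "ps_of_series1 a x \<noteq> 0" for x
    proof -
      have "real \<delta> * real k \<le> real (fst x) * real k"
        using supp[OF that] by (intro mult_right_mono) auto
      then show ?thesis by (auto simp: E_def term_le_def wdeg_def)
    qed
    show "x = (\<delta>, 0)" if "ps_of_series1 a x \<noteq> 0" "term_le 1 (E x) (E (\<delta>, 0))" for x
    proof -
      have "real (fst x * k) \<le> real (\<delta> * k)" using that(2) by (auto simp: E_def term_le_def wdeg_def)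
      moreover have "k \<noteq> 0" using P(2) P0 by (metis)
      ultimately have "fst x \<le> \<delta>" by simp
      with supp[OF that(1)] show ?thesis by (cases x) auto
    qed
  qed
  then show "ps_subst (ps_of_series1 a) P R (\<delta> * k, 0) \<noteq> 0" by (simp add: E_def leading_exp_def)
qed

locale skew_first_edge =
  fixes a :: "nat \<Rightarrow> complex" and b :: "nat \<Rightarrow> nat \<Rightarrow> complex"
    and \<delta> \<gamma> d :: nat and L :: real
  assumes \<delta>_pos: "1 \<le> \<delta>" and a_low: "\<forall>k<\<delta>. a k = 0" and a_lead: "a \<delta> \<noteq> 0"
    and vertex: "b \<gamma> d \<noteq> 0" and d_pos: "1 \<le> d" and L_pos: "0 < L"
    and leftmost: "\<And>i j. b i j \<noteq> 0 \<Longrightarrow> \<gamma> \<le> i"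
    and edge: "\<And>i j. b i j \<noteq> 0 \<Longrightarrow> wdeg L (\<gamma>, d) \<le> wdeg L (i, j)"
begin

abbreviation P :: "nat \<Rightarrow> series2" where "P n \<equiv> fst (skew_series a b n)"
abbreviation Q :: "nat \<Rightarrow> series2" where "Q n \<equiv> snd (skew_series a b n)"

lemma series_zero: "P n (0, 0) = 0" "Q n (0, 0) = 0"
proof -
  have "b 0 0 = 0"
  proof (rule ccontr)
    assume "b 0 0 \<noteq> 0"
    from edge[OF this] have "real \<gamma> + L * real d \<le> 0" by (simp add: wdeg_def)
    moreover have "0 < L * real d" using L_pos d_pos by simp
    ultimately show False by simp
  qed
  moreover have "a 0 = 0" using a_low \<delta>_pos by simp
  ultimately show "P n (0, 0) = 0" "Q n (0, 0) = 0" using skew_series_zero[of a b n] by auto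
qed

text \<open>Used with D = \<delta>^n and W the weight of the leading term of Q n: then the
  term b (\<gamma>, d) P^\<gamma> Q^d of the substitution has the least weight.\<close>
lemma edge_scaled:
  assumes "b i j \<noteq> 0" "0 \<le> W" "W \<le> L * D"
  shows "D * real \<gamma> + W * real d \<le> D * real i + W * real j"
proof -
  have "W / L \<le> D" using assms L_pos by (simp add: pos_divide_le_eq mult.commute)
  then have "0 \<le> (D - W / L) * (real i - real \<gamma>)" using leftmost[OF assms(1)] by simp
  moreover have "0 \<le> (W / L) * (wdeg L (i, j) - wdeg L (\<gamma>, d))"
    using edge[OF assms(1)] assms(2) L_pos by simp
  moreover have "D * real i + W * real j - (D * real \<gamma> + W * real d)
      = (D - W / L) * (real i - real \<gamma>) + (W / L) * (wdeg L (i, j) - wdeg L (\<gamma>, d))"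
    using L_pos by (simp add: wdeg_def field_simps)
  ultimately show ?thesis by linarith
qed

lemma edge_scaled_eq:
  assumes "b i j \<noteq> 0" "0 < W" "0 < D"
    and eq: "D * real \<gamma> + W * real d = D * real i + W * real j"
  shows "j \<le> d" and "j = d \<Longrightarrow> i = \<gamma>"
proof -
  have "0 \<le> D * (real i - real \<gamma>)" using leftmost[OF assms(1)] assms(3) by simp
  moreover have "D * (real i - real \<gamma>) + W * (real j - real d) = 0" using eq by (simp add: algebra_simps)
  ultimately have "W * (real j - real d) \<le> 0" by linarith
  then show "j \<le> d" using assms(2) by (simp add: mult_le_0_iff)
  show "i = \<gamma>" if "j = d" using eq that assms(3) by simp
qed

lemma P_order: "wdeg_ge 0 (P n) (real (\<delta> ^ n)) \<and> P n (\<delta> ^ n, 0) \<noteq> 0"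
proof (induction n)
  case 0 show ?case by (simp add: ps_z_def wdeg_ge_def wdeg_def)
next
  case (Suc n)
  then show ?case
    using ps_subst_series1_order[where P = "P n" and R = "Q n" and k = "\<delta> ^ n",
        OF a_low a_lead \<delta>_pos _ _ series_zero]
    unfolding skew_series_Suc_fst by simp
qed

lemma Q_wdeg_ge:
  assumes l: "0 \<le> l" "l \<le> L" and slope: "real \<gamma> \<le> l * (real \<delta> - real d)"
  shows "wdeg_ge l (Q n) (real (gamma_seq \<gamma> \<delta> d n) + l * real d ^ n)"
proof (induction n)
  case 0 show ?case by (simp add: ps_w_def wdeg_ge_def wdeg_def)
next
  case (Suc n)
  define W where "W = real (gamma_seq \<gamma> \<delta> d n) + l * real d ^ n"
  have "W \<le> l * real \<delta> ^ n" using gamma_seq_le[OF slope, of n] by (simp add: W_def algebra_simps)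
  also have "\<dots> \<le> L * real \<delta> ^ n" using l by (simp add: mult_right_mono)
  finally have W: "0 \<le> W" "W \<le> L * real \<delta> ^ n" using l by (auto simp: W_def)
  have "wdeg_ge l (ps_subst (case_prod b) (P n) (Q n)) (real \<delta> ^ n * real \<gamma> + W * real d)"
  proof (rule ps_subst_wdeg_ge)
    show "wdeg_ge l (P n) (real \<delta> ^ n)" using P_order[of n] l by (auto intro: wdeg_ge_mono_weight)
    show "wdeg_ge l (Q n) W" using Suc.IH by (simp add: W_def)
    fix x assume "case_prod b x \<noteq> 0"
    with edge_scaled[OF _ W] show "real \<delta> ^ n * real \<gamma> + W * real d \<le> real (fst x) * real \<delta> ^ n + real (snd x) * W"
      by (cases x) (simp add: mult.commute)
  qed
  then show ?case unfolding skew_series_Suc_snd by (simp add: W_def gamma_seq_Suc algebra_simps)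
qed

text \<open>The exponents of the leading terms of b (i, j) P^i Q^j, when P and Q have
  leading exponents (k, 0) and (g, h): the one for (\<gamma>, d) strictly comes first.\<close>
lemma edge_term_le:
  fixes k g h :: nat
  assumes bij: "b i j \<noteq> 0" and k: "0 < k" and h: "0 < h"
    and W: "real g + L * real h \<le> L * real k"
  shows "term_le L (\<gamma> * k + d * g, d * h) (i * k + j * g, j * h)"
    and "term_le L (i * k + j * g, j * h) (\<gamma> * k + d * g, d * h) \<Longrightarrow> (i, j) = (\<gamma>, d)"
proof -
  define W' where "W' = real g + L * real h"
  have W': "0 < W'" using L_pos h by (simp add: W'_def add_nonneg_pos)
  have wdeg: "wdeg L (a * k + c * g, c * h) = real k * real a + W' * real c" for a c
    by (simp add: W'_def wdeg_def algebra_simps)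
  have le: "wdeg L (\<gamma> * k + d * g, d * h) \<le> wdeg L (i * k + j * g, j * h)"
    using edge_scaled[OF bij less_imp_le[OF W']] W by (simp add: wdeg W'_def)
  have eq: "j \<le> d \<and> (j = d \<longrightarrow> i = \<gamma>)"
    if "wdeg L (i * k + j * g, j * h) = wdeg L (\<gamma> * k + d * g, d * h)"
  proof -
    have "real k * real \<gamma> + W' * real d = real k * real i + W' * real j" using that by (simp add: wdeg)
    moreover have "0 < real k" using k by simp
    ultimately show ?thesis using edge_scaled_eq[OF bij W'] by blast
  qed
  show "term_le L (\<gamma> * k + d * g, d * h) (i * k + j * g, j * h)"
    using le eq by (auto simp: term_le_def)
  assume "term_le L (i * k + j * g, j * h) (\<gamma> * k + d * g, d * h)"
  with le have "wdeg L (i * k + j * g, j * h) = wdeg L (\<gamma> * k + d * g, d * h)" and "d * h \<le> j * h"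
    by (auto simp: term_le_def)
  with eq h show "(i, j) = (\<gamma>, d)" by simp
qed

lemma Q_leading_exp:
  assumes slope: "real \<gamma> \<le> L * (real \<delta> - real d)"
  shows "leading_exp L (Q n) (gamma_seq \<gamma> \<delta> d n, d ^ n)"
proof (induction n)
  case 0 show ?case by (auto simp: ps_w_def leading_exp_def term_le_refl split: if_splits)
next
  case (Suc n)
  define g where "g = gamma_seq \<gamma> \<delta> d n"
  define E where "E x = (fst x * \<delta> ^ n + snd x * g, snd x * d ^ n)" for x :: "nat \<times> nat"
  have W: "real g + L * real (d ^ n) \<le> L * real (\<delta> ^ n)"
    using gamma_seq_le[OF slope, of n] by (simp add: g_def algebra_simps)
  note edge = edge_term_le[OF _ _ _ W] \<delta>_pos d_pos
  have "leading_exp L (ps_subst (case_prod b) (P n) (Q n)) (E (\<gamma>, d))"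
  proof (rule ps_subst_leading_exp[where P = "P n" and R = "Q n" and E = E and x_lead = "(\<gamma>, d)",
        OF series_zero])
    have P: "leading_exp L (P n) (\<delta> ^ n, 0)"
      using P_order[of n] L_pos by (intro leading_exp_of_wdeg_ge_0) auto
    show "leading_exp L (ps_mul (ps_pow (P n) (fst x)) (ps_pow (Q n) (snd x))) (E x)"
      if "case_prod b x \<noteq> 0" for x
      using leading_exp_mul(1)[OF leading_exp_pow(1)[OF P, of "fst x"]
          leading_exp_pow(1)[OF Suc.IH[folded g_def], of "snd x"]]
      by (simp add: E_def)
    show "case_prod b (\<gamma>, d) \<noteq> 0" using vertex by simp
    show "term_le L (E (\<gamma>, d)) (E x)" if "case_prod b x \<noteq> 0" for x
      using that edge by (cases x) (simp add: E_def mult.commute)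
    show "x = (\<gamma>, d)" if "case_prod b x \<noteq> 0" "term_le L (E x) (E (\<gamma>, d))" for x
      using that edge by (cases x) (simp add: E_def mult.commute)
  qed
  then show ?case
    unfolding skew_series_Suc_snd by (simp add: E_def g_def gamma_seq_Suc mult.commute)
qed

end

lemma case3_skew_first_edge:
  assumes \<delta>_ge: "\<delta> \<ge> 1" and a_low: "\<forall>k<\<delta>. a k = 0" and a_lead: "a \<delta> \<noteq> 0"
    and v1: "(real \<gamma>, real d) extreme_point_of newton_polygon b"
    and v2: "(real n2, real m2) extreme_point_of newton_polygon b" and v12: "\<gamma> < n2"
    and v_left: "\<forall>v. v extreme_point_of newton_polygon b \<longrightarrow> v \<noteq> (real \<gamma>, real d) \<longrightarrow> fst v \<ge> real n2"
  shows "skew_first_edge a b \<delta> \<gamma> d ((real n2 - real \<gamma>) / (real d - real m2))"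
proof
  have md: "m2 < d" by (rule newton_second_vertex_lower[OF v1 v2 v12])
  then show "1 \<le> d" "0 < (real n2 - real \<gamma>) / (real d - real m2)" using v12 by auto
  show "b \<gamma> d \<noteq> 0" "\<And>i j. b i j \<noteq> 0 \<Longrightarrow> \<gamma> \<le> i"
    using newton_leftmost_vertex[OF v1 v12 v_left] by auto
  show "\<And>i j. b i j \<noteq> 0 \<Longrightarrow> wdeg ((real n2 - real \<gamma>) / (real d - real m2)) (\<gamma>, d)
      \<le> wdeg ((real n2 - real \<gamma>) / (real d - real m2)) (i, j)"
    by (rule newton_first_edge[OF v1 v2 v12 v_left])
qed (use \<delta>_ge a_low a_lead in auto)

lemma case3_slope_bounds:
  fixes \<gamma> \<delta> d n2 m2 :: nat and l :: real
  defines "L \<equiv> (real n2 - real \<gamma>) / (real d - real m2)"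
  assumes v12: "\<gamma> < n2" and md: "m2 < d"
    and case3: "real d + real \<gamma> * (real d - real m2) / (real n2 - real \<gamma>) \<le> real \<delta>"
  shows "real \<gamma> \<le> L * (real \<delta> - real d)"
    and "l \<in> (if \<gamma> > 0 then {real \<gamma> / (real \<delta> - real d) .. L} else {0 <.. L}) \<Longrightarrow>
         0 < l \<and> l \<le> L \<and> real \<gamma> \<le> l * (real \<delta> - real d)"
proof -
  have pos: "0 < real n2 - real \<gamma>" "0 < real d - real m2" using v12 md by auto
  have "real \<gamma> * (real d - real m2) / (real n2 - real \<gamma>) \<le> real \<delta> - real d" using case3 by linarith
  then have "real \<gamma> * (real d - real m2) \<le> (real \<delta> - real d) * (real n2 - real \<gamma>)"
    using pos by (simp add: divide_le_eq)
  then show "real \<gamma> \<le> L * (real \<delta> - real d)"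
    using pos by (simp add: L_def field_simps)
  assume l: "l \<in> (if \<gamma> > 0 then {real \<gamma> / (real \<delta> - real d) .. L} else {0 <.. L})"
  show "0 < l \<and> l \<le> L \<and> real \<gamma> \<le> l * (real \<delta> - real d)"
  proof (cases "\<gamma> > 0")
    case True
    then have "0 < real \<gamma> * (real d - real m2) / (real n2 - real \<gamma>)" using pos by simp
    then have \<delta>d: "0 < real \<delta> - real d" using case3 by linarith
    from True l have l: "real \<gamma> / (real \<delta> - real d) \<le> l" "l \<le> L" by auto
    have "0 < real \<gamma> / (real \<delta> - real d)" using True \<delta>d by simp
    moreover have "real \<gamma> \<le> l * (real \<delta> - real d)" using l(1) \<delta>d by (simp add: divide_le_eq)
    ultimately show ?thesis using l by linarith
  next
    case False
    then have "real d \<le> real \<delta>" using case3 by simp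
    with False l show ?thesis by auto
  qed
qed

theorem theorem5p1:
  fixes p :: "complex \<Rightarrow> complex" and q :: "complex \<Rightarrow> complex \<Rightarrow> complex"
    and a :: "nat \<Rightarrow> complex" and b :: "nat \<Rightarrow> nat \<Rightarrow> complex"
    and \<delta> \<gamma> d n2 m2 :: nat
  assumes p_germ: "germ_series1 a p"
    and q_germ: "germ_series2 b q"
    and \<delta>_ge: "\<delta> \<ge> 1"
    and a_low: "\<forall>k<\<delta>. a k = 0" and a_lead: "a \<delta> \<noteq> 0"
    and b00: "b 0 0 = 0"
    and q_nonzero: "\<exists>i j. b i j \<noteq> 0"
    \<comment> \<open>(\<gamma>,d) = (n_1,m_1) and (n2,m2) are the two leftmost vertices of N(q); hence s > 1\<close>
    and v1: "(real \<gamma>, real d) extreme_point_of newton_polygon b"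
    and v2: "(real n2, real m2) extreme_point_of newton_polygon b"
    and v12: "\<gamma> < n2"
    and v_left: "\<forall>v. v extreme_point_of newton_polygon b \<longrightarrow> v \<noteq> (real \<gamma>, real d) \<longrightarrow> fst v \<ge> real n2"
    \<comment> \<open>Case 3: T_1 \<le> \<delta>\<close>
    and case3: "real d + real \<gamma> * (real d - real m2) / (real n2 - real \<gamma>) \<le> real \<delta>"
  shows "\<forall>n\<ge>1. coeff2 (Qn p q n) (gamma_seq \<gamma> \<delta> d n) (d ^ n) \<noteq> 0 \<and>
           (\<forall>l \<in> (if \<gamma> > 0
                    then {real \<gamma> / (real \<delta> - real d) .. (real n2 - real \<gamma>) / (real d - real m2)}
                    else {0 <.. (real n2 - real \<gamma>) / (real d - real m2)}).
              w_l l (coeff2 (Qn p q n)) = w_l l (monomial2 (gamma_seq \<gamma> \<delta> d n) (d ^ n)) \<and>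
              w_l l (monomial2 (gamma_seq \<gamma> \<delta> d n) (d ^ n)) = real (gamma_seq \<gamma> \<delta> d n) + l * real (d ^ n))"
proof (intro allI impI conjI ballI)
  define L where "L = (real n2 - real \<gamma>) / (real d - real m2)"
  have md: "m2 < d" by (rule newton_second_vertex_lower[OF v1 v2 v12])
  note slope = case3_slope_bounds[OF v12 md case3, folded L_def]
  interpret skew_first_edge a b \<delta> \<gamma> d L
    unfolding L_def by (rule case3_skew_first_edge[OF \<delta>_ge a_low a_lead v1 v2 v12 v_left])
  fix n :: nat
  have "a 0 = 0" using a_low \<delta>_ge by simp
  then have coeff: "coeff2 (Qn p q n) = (\<lambda>i j. snd (skew_series a b n) (i, j))"
    by (intro ext) (rule coeff2_Qn[OF p_germ q_germ _ b00])
  have lead: "snd (skew_series a b n) (gamma_seq \<gamma> \<delta> d n, d ^ n) \<noteq> 0"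
    using Q_leading_exp[OF slope(1), of n] by (simp add: leading_exp_def)
  then show "coeff2 (Qn p q n) (gamma_seq \<gamma> \<delta> d n) (d ^ n) \<noteq> 0" by (simp add: coeff)
  fix l assume "l \<in> (if \<gamma> > 0 then {real \<gamma> / (real \<delta> - real d) .. L} else {0 <.. L})"
  then have l: "0 < l" "l \<le> L" "real \<gamma> \<le> l * (real \<delta> - real d)" using slope(2) by auto
  show "w_l l (monomial2 (gamma_seq \<gamma> \<delta> d n) (d ^ n)) = real (gamma_seq \<gamma> \<delta> d n) + l * real (d ^ n)"
    by (rule w_l_monomial2)
  show "w_l l (coeff2 (Qn p q n)) = w_l l (monomial2 (gamma_seq \<gamma> \<delta> d n) (d ^ n))"
    using w_l_eq_wdeg[OF Q_wdeg_ge[OF less_imp_le[OF l(1)] l(2,3)] lead] l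
    by (simp add: coeff w_l_monomial2 wdeg_def)
qed

end
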